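(* Two admissible families of weights $\alpha,\beta$ on $\mathcal P$ coincide if and only if they have the same basic coefficients, i.e. $\nu_{\mathsf q}(\alpha)=\nu_{\mathsf q}(\beta)$, $\xi_{\mathsf q}(\alpha)=\xi_{\mathsf q}(\beta)$, $\nu_{\mathsf q\mathsf Q}(\alpha)=\nu_{\mathsf q\mathsf Q}(\beta)$ and $\xi_{\mathsf q\mathsf Q}(\alpha)=\xi_{\mathsf q\mathsf Q}(\beta)$ for all $\mathsf q,\mathsf Q\in\mathcal F$.
   Context: Fix a finite set $\mathcal F$ of faces. For a word $\mathbf f\in\mathcal F^n$ ($n\ge1$), $[n]_{\mathbf f}$ is $\{1,\dots,n\}$ with faces $\ell\mapsto\mathbf f(\ell)$ (legs); $\mathcal P(\mathbf f)$ is the set of set partitions of $[n]$ viewed with these faces, $\mathcal P=\bigcup_{\mathbf f}\mathcal P(\mathbf f)$. A finite totally ordered set $S$ with a face map is identified with $[m]_{|S|}$ through the order-preserving bijection ($|S|$ = word of faces read in order), so partitions of such sets are elements of $\mathcal P$. $1_{\mathbf f}$ is the one-block partition. For blocks $\beta_1\ne\beta_2$ of $\pi$, $\pi_{\beta_1\smile\beta_2}=(\pi\setminus\{\beta_1,\beta_2\})\cup\{\beta_1\cup\beta_2\}$, and $\{\beta_1,\beta_2\}$ is regarded as a partition of the multi-faced set $\beta_1\cup\beta_2$. Reduction: for $\pi\in\mathcal P(\mathbf f)$ let $s\sim t$ ($s\le t$) iff all $r\in[s,t]$ have the same face and lie in the same block; $\pi_{\mathrm{red}}$ is the induced partition of $[n]/\sim$.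 Mirror: $\overline{\mathbf f}(i)=\mathbf f(n+1-i)$, $\overline\pi=\{\{n+1-i:i\in\beta\}:\beta\in\pi\}$. Admissible: $\alpha=(\alpha_\pi)_{\pi\in\mathcal P}\subset\mathbb C$ with (i) $\alpha_{1_{\mathbf f}}=1$; (ii) $\alpha_{\{\{1\},\{2\}\}}=1$ for every $\mathbf f\in\mathcal F^2$; (iii) $\alpha_\pi=\alpha_{\pi_{\mathrm{red}}}$; (iv) if $\pi\in\mathcal P(\mathbf f)$ has blocks $\beta_1\ne\beta_2$ with $i\in\beta_1$, $i+1\in\beta_2$, $\mathbf f(i)=\mathbf f(i+1)$, then $\alpha_\pi=\alpha_{\pi_{\beta_1\smile\beta_2}}\alpha_{\{\beta_1,\beta_2\}}$; (v) $\alpha_\pi=\alpha_\sigma$ whenever $\pi\in\mathcal P(\mathbf f)$, $\sigma\in\mathcal P(\mathbf g)$ have the same set partition and $\mathbf f(\ell)=\mathbf g(\ell)$ for $1<\ell<n$; (vi) $\alpha_{\overline\pi}=\overline{\alpha_\pi}$. Basic coefficients of an admissible $\alpha$, for $\mathsf q,\mathsf Q\in\mathcal F$ (the faces of the first and last leg are arbitrary, which does not matter by (v)): $\nu_{\mathsf q}=\alpha_\pi$ for $\pi=\{\{1,3\},\{2\}\}$ with $\mathbf f(2)=\mathsf q$; $\xi_{\mathsf q}=\alpha_\pi$ for $\pi=\{\{1,3\},\{2,4\}\}$ with $\mathbf f(2)=\mathbf f(3)=\mathsf q$; $\nu_{\mathsf q\mathsf Q}=\alpha_\pi$ for $\pi=\{\{1,4\},\{2,3\}\}$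 with $\mathbf f(2)=\mathsf q$, $\mathbf f(3)=\mathsf Q$; $\xi_{\mathsf q\mathsf Q}=\alpha_\pi$ for $\pi=\{\{1,3\},\{2,4\}\}$ with $\mathbf f(2)=\mathsf q$, $\mathbf f(3)=\mathsf Q$. *)

theory Defs
  imports Complex_Main "HOL-Library.Disjoint_Sets"
begin

text \<open>Faces form a finite type 'f.  A multi-faced partition is a pair (w, pi):
  w is the word of faces (leg l has face w ! (l - 1), legs are 1..length w),
  pi is a set partition of {1..length w}.\<close>

type_synonym 'f mfpart = "'f list \<times> nat set set"

definition mfparts :: "('f::finite) mfpart set" where
  "mfparts = {(w, p). length w \<ge> 1 \<and> partition_on {1..length w} p}"

abbreviation face :: "'f list \<Rightarrow> nat \<Rightarrow> 'f" where
  "face w l \<equiv> w ! (l - 1)"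

text \<open>A subset S of the legs with a partition rho of S, regarded (via the
  order-preserving bijection S -> {1..card S}) as an element of P.\<close>
definition sub_part :: "'f list \<Rightarrow> nat set \<Rightarrow> nat set set \<Rightarrow> 'f mfpart" where
  "sub_part w S rho =
     (map (face w) (sorted_list_of_set S),
      (\<lambda>B. (\<lambda>i. card {j\<in>S. j < i} + 1) ` B) ` rho)"

definition one_block :: "'f list \<Rightarrow> 'f mfpart" where
  "one_block w = (w, {{1..length w}})"

definition red_sim :: "'f list \<Rightarrow> nat set set \<Rightarrow> nat \<Rightarrow> nat \<Rightarrow> bool" where
  "red_sim w p s t \<longleftrightarrow> s \<le> t \<and> (\<forall>r\<in>{s..t}. face w r = face w s) \<and> (\<exists>B\<in>p. {s..t} \<subseteq> B)"

text \<open>The ~-classes are intervals; each class is represented by its least element.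
  The reduced partition is the induced partition of the set of classes,
  ordered and faced via these representatives.\<close>
definition red_reps :: "'f list \<Rightarrow> nat set set \<Rightarrow> nat set" where
  "red_reps w p = {i \<in> {1..length w}. \<not> (i > 1 \<and> red_sim w p (i - 1) i)}"

definition reduce :: "'f mfpart \<Rightarrow> 'f mfpart" where
  "reduce x = (case x of (w, p) \<Rightarrow>
      sub_part w (red_reps w p) ((\<lambda>B. B \<inter> red_reps w p) ` p))"

definition merge_blocks :: "nat set set \<Rightarrow> nat set \<Rightarrow> nat set \<Rightarrow> nat set set" where
  "merge_blocks p b1 b2 = (p - {b1, b2}) \<union> {b1 \<union> b2}"

definition mirror :: "'f mfpart \<Rightarrow> 'f mfpart" where
  "mirror x = (case x of (w, p) \<Rightarrow>
      (rev w, (\<lambda>B. (\<lambda>i. length w + 1 - i) ` B) ` p))"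

definition admissible :: "(('f::finite) mfpart \<Rightarrow> complex) \<Rightarrow> bool" where
  "admissible a \<longleftrightarrow>
     (\<forall>w. length w \<ge> 1 \<longrightarrow> a (one_block w) = 1) \<and>
     (\<forall>x y. a ([x, y], {{1}, {2}}) = 1) \<and>
     (\<forall>x\<in>mfparts. a x = a (reduce x)) \<and>
     (\<forall>w p b1 b2 i. (w, p) \<in> mfparts \<longrightarrow> b1 \<in> p \<longrightarrow> b2 \<in> p \<longrightarrow> b1 \<noteq> b2 \<longrightarrow>
        i \<in> b1 \<longrightarrow> i + 1 \<in> b2 \<longrightarrow> face w i = face w (i + 1) \<longrightarrow>
        a (w, p) = a (w, merge_blocks p b1 b2) * a (sub_part w (b1 \<union> b2) {b1, b2})) \<and>
     (\<forall>w g p. (w, p) \<in> mfparts \<longrightarrow> length g = length w \<longrightarrow>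
        (\<forall>l. 1 < l \<and> l < length w \<longrightarrow> face w l = face g l) \<longrightarrow> a (w, p) = a (g, p)) \<and>
     (\<forall>x\<in>mfparts. a (mirror x) = cnj (a x))"

text \<open>Basic coefficients.  The first and last legs are given arbitrary fixed
  faces (those of the neighbouring inner leg); by (v) this choice is irrelevant.\<close>
definition nu1 :: "('f mfpart \<Rightarrow> complex) \<Rightarrow> 'f \<Rightarrow> complex" where
  "nu1 a q = a ([q, q, q], {{1, 3}, {2}})"

definition xi1 :: "('f mfpart \<Rightarrow> complex) \<Rightarrow> 'f \<Rightarrow> complex" where
  "xi1 a q = a ([q, q, q, q], {{1, 3}, {2, 4}})"

definition nu2 :: "('f mfpart \<Rightarrow> complex) \<Rightarrow> 'f \<Rightarrow> 'f \<Rightarrow> complex" where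
  "nu2 a q Q = a ([q, q, Q, Q], {{1, 4}, {2, 3}})"

definition xi2 :: "('f mfpart \<Rightarrow> complex) \<Rightarrow> 'f \<Rightarrow> 'f \<Rightarrow> complex" where
  "xi2 a q Q = a ([q, q, Q, Q], {{1, 3}, {2, 4}})"

end

theory Submission
  imports Defs
begin

text \<open>
  A multi-faced partition is encoded by a word of (face, label) letters, the legs with equal
  labels forming a block. In this encoding axiom (iii) deletes a repeated letter, (v) changes
  the faces of the two end letters, and (iv), applied at two adjacent letters with equal faces,
  writes the weight of a word as the weight of the word with their two labels identified times
  the weight of its restriction to these two labels.

  By well-founded induction the weight of every word is determined by the basic coefficients.
  A word with at least three labels splits by (iv) into words with fewer labels. On two labels
  x and y, once repeated end letters are dropped, the words x y x, x y y x and x y x y carry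
  \<nu>_q, \<nu>_qQ and \<xi>_qQ, and every other word splits into words with fewer runs, or
  with the same runs and fewer letters outside the first and last run.
\<close>

section \<open>Labelled words\<close>

abbreviation label_block :: "('f \<times> 'l) list \<Rightarrow> 'l \<Rightarrow> nat set" where
  "label_block xs c \<equiv> {i\<in>{1..length xs}. snd (xs!(i-1)) = c}"

definition mfpart_of :: "('f \<times> 'l) list \<Rightarrow> 'f mfpart" where
  "mfpart_of xs = (map fst xs, label_block xs ` snd ` set xs)"

lemma card_less_nth_sorted:
  assumes "sorted_wrt (<) (L::nat list)" "k < length L"
  shows "card {j\<in>set L. j < L!k} = k"
proof -
  have "j \<in> set L \<and> j < L!k \<longleftrightarrow> j \<in> set (take k L)" for j
  proof
    assume "j \<in> set L \<and> j < L!k"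
    then obtain m where m: "m < length L" "L!m = j" "j < L!k" by (auto simp: in_set_conv_nth)
    have "m < k"
    proof (rule ccontr)
      assume "\<not> m < k"
      then have "L!k \<le> L!m" using assms m
        by (metis le_eq_less_or_eq not_less sorted_wrt_iff_nth_less)
      then show False using m by simp
    qed
    then show "j \<in> set (take k L)" using m by (auto simp: in_set_conv_nth)
  next
    assume "j \<in> set (take k L)"
    then obtain m where "m < k" "L!m = j" using assms(2) by (auto simp: in_set_conv_nth)
    then show "j \<in> set L \<and> j < L!k" using assms
      by (metis dual_order.strict_trans in_set_conv_nth sorted_wrt_nth_less)
  qed
  then have "{j\<in>set L. j < L!k} = set (take k L)" by blast
  moreover have "distinct (take k L)" using assms(1) by (simp add: strict_sorted_iff)
  ultimately show ?thesis using assms(2) by (simp add: distinct_card)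
qed

lemma rank_image:
  fixes S :: "nat set"
  assumes "finite S"
  defines "L \<equiv> sorted_list_of_set S"
  shows "(\<lambda>i. card {j\<in>S. j < i} + 1) ` {i\<in>S. P i}
      = {k\<in>{1..length L}. P (L!(k-1))}"
proof -
  have sL: "set L = S" and st: "sorted_wrt (<) L"
    using assms by (auto simp: L_def strict_sorted_list_of_set)
  show ?thesis
  proof (intro equalityI subsetI)
    fix k assume "k \<in> (\<lambda>i. card {j\<in>S. j < i} + 1) ` {i\<in>S. P i}"
    then obtain i where i: "i \<in> S" "P i" "k = card {j\<in>S. j < i} + 1" by auto
    obtain m where m: "m < length L" "L!m = i" using i sL by (metis in_set_conv_nth)
    have "card {j\<in>S. j < i} = m" using card_less_nth_sorted[OF st m(1)] m sL by simp
    then show "k \<in> {k\<in>{1..length L}. P (L!(k-1))}" using i m by auto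
  next
    fix k assume "k \<in> {k\<in>{1..length L}. P (L!(k-1))}"
    then have k: "1 \<le> k" "k \<le> length L" "P (L!(k-1))" by auto
    have "card {j\<in>S. j < L!(k-1)} = k - 1"
      using card_less_nth_sorted[OF st, of "k-1"] k sL by simp
    moreover have "L!(k-1) \<in> S"
      using k sL by (metis Suc_le_eq diff_less less_le_trans nth_mem zero_less_one)
    ultimately show "k \<in> (\<lambda>i. card {j\<in>S. j < i} + 1) ` {i\<in>S. P i}"
      using k by (intro image_eqI[of _ _ "L!(k-1)"]) auto
  qed
qed

lemma sub_part_label_blocks:
  assumes S: "S \<subseteq> {1..length xs}"
  defines "ys \<equiv> map (\<lambda>i. xs!(i-1)) (sorted_list_of_set S)"
  shows "sub_part (map fst xs) S ((\<lambda>c. {i\<in>S. snd (xs!(i-1)) = c}) ` C)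
       = (map fst ys, label_block ys ` C)"
proof -
  have fin: "finite S" using S finite_subset by blast
  have "face (map fst xs) i = fst (xs ! (i - 1))" if "i \<in> S" for i
  proof -
    have "i - 1 < length xs" using that S by force
    then show ?thesis by simp
  qed
  then have faces: "map (face (map fst xs)) (sorted_list_of_set S) = map fst ys"
    using fin by (simp add: ys_def)
  have "(\<lambda>i. card {j\<in>S. j < i} + 1) ` {i\<in>S. snd (xs!(i-1)) = c} = label_block ys c"
    for c
    using rank_image[OF fin, of "\<lambda>i. snd (xs!(i-1)) = c"] unfolding ys_def by auto
  then show ?thesis unfolding sub_part_def faces by (auto simp: image_image)
qed

lemma sorted_list_of_set_filter_upt: "sorted_list_of_set {i\<in>{1..n}. Q i} = filter Q [1..<Suc n]"
proof -
  have eq: "{i\<in>{1..n}. Q i} = set (filter Q [1..<Suc n])" by auto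
  have "sorted (filter Q [1..<Suc n])" "distinct (filter Q [1..<Suc n])"
    by (auto simp del: upt_Suc intro: sorted_wrt_filter)
  then show ?thesis
    unfolding eq by (simp only: sorted_list_of_set_sort_remdups distinct_remdups_id sorted_sort_id)
qed

lemma map_nth_pred_upt: "map (\<lambda>i. xs!(i-1)) [1..<Suc (length xs)] = xs"
proof -
  have "[1..<Suc (length xs)] = map Suc [0..<length xs]" by (simp add: map_Suc_upt del: upt_Suc)
  then show ?thesis by (simp add: map_nth o_def del: upt_Suc)
qed

lemma map_nth_filter_positions:
  "map (\<lambda>i. xs!(i-1)) (sorted_list_of_set {i\<in>{1..length xs}. P (xs!(i-1))})
      = filter P xs"
proof -
  have "map (\<lambda>i. xs!(i-1)) (sorted_list_of_set {i\<in>{1..length xs}. P (xs!(i-1))})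
     = map (\<lambda>i. xs!(i-1)) (filter (\<lambda>i. P (xs!(i-1))) [1..<Suc (length xs)])"
    by (simp only: sorted_list_of_set_filter_upt)
  also have "\<dots> = filter P (map (\<lambda>i. xs!(i-1)) [1..<Suc (length xs)])"
    by (simp only: filter_map o_def)
  also have "\<dots> = filter P xs" by (simp only: map_nth_pred_upt)
  finally show ?thesis .
qed

lemma mfpart_of_in_mfparts: "xs \<noteq> [] \<Longrightarrow> mfpart_of xs \<in> mfparts"
proof -
  assume "xs \<noteq> []"
  have "partition_on {1..length xs} (label_block xs ` snd ` set xs)"
  proof (rule partition_onI)
    show "\<Union> (label_block xs ` snd ` set xs) = {1..length xs}"
    proof (intro equalityI subsetI)
      fix i assume "i \<in> {1..length xs}"
      then have "xs!(i-1) \<in> set xs" by auto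
      then show "i \<in> \<Union> (label_block xs ` snd ` set xs)"
        using \<open>i \<in> _\<close> by blast
    qed auto
  next
    fix B B' assume "B \<in> label_block xs ` snd ` set xs" "B' \<in> label_block xs ` snd ` set xs"
      "B \<noteq> B'"
    then show "disjnt B B'" by (auto simp: disjnt_def)
  next
    show "{} \<notin> label_block xs ` snd ` set xs"
    proof
      assume "{} \<in> label_block xs ` snd ` set xs"
      then obtain z where z: "z \<in> set xs" "label_block xs (snd z) = {}" by auto
      then obtain m where "m < length xs" "xs!m = z" by (metis in_set_conv_nth)
      then have "Suc m \<in> label_block xs (snd z)" by auto
      then show False using z by auto
    qed
  qed
  then show ?thesis
    using \<open>xs \<noteq> []\<close> by (simp add: mfparts_def mfpart_of_def Suc_le_eq)
qed

lemma label_block_inj: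
  assumes "c \<in> snd ` set xs" "label_block xs c = label_block xs d"
  shows "c = d"
proof -
  obtain z where "z \<in> set xs" "snd z = c" using assms by auto
  then obtain m where "m < length xs" "snd (xs!m) = c" by (metis in_set_conv_nth)
  then have "Suc m \<in> label_block xs c" by auto
  then have "Suc m \<in> label_block xs d" by (rule subst[OF assms(2)])
  then show ?thesis using \<open>snd (xs!m) = c\<close> by simp
qed

lemma sub_part_filter_labels:
  assumes "C \<subseteq> snd ` set xs"
  shows "sub_part (map fst xs) {i\<in>{1..length xs}. snd (xs!(i-1)) \<in> C} (label_block xs ` C)
       = mfpart_of (filter (\<lambda>z. snd z \<in> C) xs)"
proof -
  let ?S = "{i\<in>{1..length xs}. snd (xs!(i-1)) \<in> C}"
  have e: "label_block xs ` C = (\<lambda>c. {i\<in>?S. snd (xs!(i-1)) = c}) ` C" by auto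
  have ys: "map (\<lambda>i. xs!(i-1)) (sorted_list_of_set ?S)
      = filter (\<lambda>z. snd z \<in> C) xs"
    using map_nth_filter_positions[where P="\<lambda>z. snd z \<in> C" and xs=xs] by simp
  have C: "snd ` set (filter (\<lambda>z. snd z \<in> C) xs) = C" using assms by auto
  have "?S \<subseteq> {1..length xs}" by auto
  from sub_part_label_blocks[OF this] show ?thesis unfolding e ys mfpart_of_def C .
qed

lemma remdups_adj_conv_nth_filter:
  "remdups_adj xs = map (nth xs) (filter (\<lambda>i. i = 0 \<or> xs!(i-1) \<noteq> xs!i) [0..<length xs])"
proof (induction xs)
  case Nil then show ?case by simp
next
  case (Cons x xs)
  let ?Q = "\<lambda>i. i = 0 \<or> xs!(i-1) \<noteq> xs!i"
  let ?Q' = "\<lambda>i. (i = 0 \<and> x \<noteq> xs!0) \<or> (i > 0 \<and> ?Q i)"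
  have u: "[0..<Suc n] = 0 # map Suc [0..<n]" for n
    by (simp add: map_Suc_upt upt_conv_Cons del: upt_Suc)
  have r: "map (nth (x#xs)) (filter (\<lambda>i. i = 0 \<or> (x#xs)!(i-1) \<noteq> (x#xs)!i) [0..<length (x#xs)])
     = x # map (nth xs) (filter ?Q' [0..<length xs])"
    by (simp only: length_Cons u)
      (auto simp: filter_map o_def nth_Cons' intro!: arg_cong[where f="map _"] filter_cong)
  show ?case
  proof (cases xs)
    case Nil then show ?thesis by simp
  next
    case (Cons y ys)
    have u2: "[0..<length xs] = 0 # map Suc [0..<length ys]" using Cons u by simp
    show ?thesis
    proof (cases "x = y")
      case True
      have "remdups_adj (x#xs) = remdups_adj xs" using Cons True by simp
      also have "\<dots> = map (nth xs) (filter ?Q [0..<length xs])" by (rule Cons.IH)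
      also have "\<dots> = x # map (nth xs) (filter ?Q' [0..<length xs])"
        unfolding u2 using Cons True by (simp add: filter_map o_def)
      finally show ?thesis using r by simp
    next
      case False
      have "remdups_adj (x#xs) = x # remdups_adj xs" using Cons False by simp
      also have "remdups_adj xs = map (nth xs) (filter ?Q [0..<length xs])" by (rule Cons.IH)
      also have "filter ?Q [0..<length xs] = filter ?Q' [0..<length xs]"
        using Cons False by (auto intro!: filter_cong)
      finally show ?thesis using r by simp
    qed
  qed
qed

lemma remdups_adj_conv_map_nth_pred:
  "map (\<lambda>i. xs!(i-1)) (filter (\<lambda>i. i = 1 \<or> xs!(i-2) \<noteq> xs!(i-1)) [1..<Suc (length xs)])
     = remdups_adj xs"
proof -
  have "[1..<Suc (length xs)] = map Suc [0..<length xs]" by (simp add: map_Suc_upt del: upt_Suc)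
  then show ?thesis unfolding remdups_adj_conv_nth_filter[of xs]
    by (simp add: filter_map o_def del: upt_Suc)
qed

lemma reduce_mfpart_of: "reduce (mfpart_of xs) = mfpart_of (remdups_adj xs)"
proof -
  let ?w = "map fst xs" and ?p = "label_block xs ` snd ` set xs"
  let ?Q = "\<lambda>i. i = 1 \<or> xs!(i-2) \<noteq> xs!(i-1)"
  have rs: "red_sim ?w ?p (i-1) i \<longleftrightarrow> xs!(i-2) = xs!(i-1)"
    if "1 < i" "i \<le> length xs" for i
  proof -
    define j where "j = i - 2"
    have j: "i = Suc (Suc j)" unfolding j_def using that(1) by arith
    have jl: "Suc j < length xs" using that j by simp
    have ii: "{i-1..i} = {Suc j, Suc (Suc j)}" using j by auto
    have f: "face ?w (i-1) = fst (xs!j)" "face ?w i = fst (xs!(Suc j))" using j jl by auto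
    have "(\<exists>B\<in>?p. {Suc j, Suc (Suc j)} \<subseteq> B) \<longleftrightarrow> snd (xs!j) = snd (xs!(Suc j))"
    proof
      assume "\<exists>B\<in>?p. {Suc j, Suc (Suc j)} \<subseteq> B"
      then obtain c where "{Suc j, Suc (Suc j)} \<subseteq> label_block xs c" by auto
      then show "snd (xs!j) = snd (xs!(Suc j))" by auto
    next
      assume a: "snd (xs!j) = snd (xs!(Suc j))"
      have "xs!(Suc j) \<in> set xs" using jl by auto
      moreover have "{Suc j, Suc (Suc j)} \<subseteq> label_block xs (snd (xs!(Suc j)))"
        using jl a by auto
      ultimately show "\<exists>B\<in>?p. {Suc j, Suc (Suc j)} \<subseteq> B" by blast
    qed
    moreover have "xs!(i-2) = xs!j" "xs!(i-1) = xs!(Suc j)" using j by auto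
    moreover have "red_sim ?w ?p (i-1) i \<longleftrightarrow> face ?w (i-1) = face ?w i
        \<and> (\<exists>B\<in>?p. {Suc j, Suc (Suc j)} \<subseteq> B)"
      unfolding red_sim_def ii using j by auto
    ultimately show ?thesis unfolding f by (simp add: prod_eq_iff)
  qed
  have R: "red_reps ?w ?p = {i\<in>{1..length xs}. ?Q i}"
    unfolding red_reps_def using rs by auto
  let ?R = "{i\<in>{1..length xs}. ?Q i}"
  have e: "(\<lambda>B. B \<inter> ?R) ` ?p
      = (\<lambda>c. {i\<in>?R. snd (xs!(i-1)) = c}) ` snd ` set xs"
    by (auto simp: image_image)
  have sub: "?R \<subseteq> {1..length xs}" by auto
  have ys: "map (\<lambda>i. xs!(i-1)) (sorted_list_of_set ?R) = remdups_adj xs"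
    by (simp only: sorted_list_of_set_filter_upt remdups_adj_conv_map_nth_pred)
  have L: "snd ` set xs = snd ` set (remdups_adj xs)" by simp
  show ?thesis unfolding reduce_def mfpart_of_def[of xs] prod.case
    unfolding R e
    unfolding sub_part_label_blocks[OF sub] ys
    unfolding L mfpart_of_def ..
qed

definition relabel :: "'l \<Rightarrow> 'l \<Rightarrow> ('f \<times> 'l) list \<Rightarrow> ('f \<times> 'l) list" where
  "relabel a b xs = map (\<lambda>z. (fst z, if snd z = a then b else snd z)) xs"

lemma relabel_simps [simp]:
  "relabel a b [] = []"
  "relabel a b (z # ys) = (fst z, if snd z = a then b else snd z) # relabel a b ys"
  "relabel a b (xs @ ys) = relabel a b xs @ relabel a b ys"
  "length (relabel a b xs) = length xs"
  "map fst (relabel a b xs) = map fst xs"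
  by (simp_all add: relabel_def)

lemma labels_relabel: "snd ` set (relabel a b xs) = (\<lambda>l. if l = a then b else l) ` snd ` set xs"
  by (auto simp: relabel_def image_image)

lemma label_block_relabel:
  assumes "a \<noteq> b"
  shows "label_block (relabel a b xs) c =
    (if c = b then label_block xs a \<union> label_block xs b else if c = a then {} else label_block xs c)"
proof -
  have nth: "snd (relabel a b xs ! (i-1)) = (if snd (xs!(i-1)) = a then b else snd (xs!(i-1)))"
    if "i \<in> {1..length xs}" for i using that by (auto simp: relabel_def)
  have "i \<in> label_block (relabel a b xs) c \<longleftrightarrow> i \<in> (if c = b then label_block xs a \<union> label_block xs b
    else if c = a then {} else label_block xs c)" for i
  proof (cases "i \<in> {1..length xs}")
    case True
    then show ?thesis using nth[OF True] assms
      by (cases "snd (xs!(i-1)) = a"; cases "c = b"; cases "c = a"; simp)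
  qed auto
  then show ?thesis by blast
qed

lemma labels_relabel_eq:
  assumes "a \<in> snd ` set xs"
  shows "snd ` set (relabel a b xs) = (snd ` set xs - {a}) \<union> {b}"
  unfolding labels_relabel
proof (intro equalityI subsetI)
  fix l assume "l \<in> (\<lambda>l. if l = a then b else l) ` (snd ` set xs)"
  then obtain m where "m \<in> snd ` set xs" "l = (if m = a then b else m)" by blast
  then show "l \<in> (snd ` set xs - {a}) \<union> {b}" by (cases "m = a") auto
next
  fix l assume l: "l \<in> (snd ` set xs - {a}) \<union> {b}"
  show "l \<in> (\<lambda>l. if l = a then b else l) ` (snd ` set xs)"
  proof (cases "l = b")
    case True then show ?thesis using assms by (intro image_eqI[of _ _ a]) auto
  next
    case False then show ?thesis using l by (intro image_eqI[of _ _ l]) auto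
  qed
qed

lemma merge_blocks_mfpart_of:
  assumes "a \<in> snd ` set xs" "b \<in> snd ` set xs" "a \<noteq> b"
  shows "mfpart_of (relabel a b xs)
       = (map fst xs, merge_blocks (snd (mfpart_of xs)) (label_block xs a) (label_block xs b))"
proof -
  note blocks = label_block_relabel[OF assms(3), of xs]
  note labels = labels_relabel_eq[OF assms(1), of b]
  have "label_block (relabel a b xs) ` snd ` set (relabel a b xs)
      = (label_block xs ` snd ` set xs - {label_block xs a, label_block xs b})
        \<union> {label_block xs a \<union> label_block xs b}"
  proof (intro equalityI subsetI)
    fix B assume "B \<in> label_block (relabel a b xs) ` snd ` set (relabel a b xs)"
    then obtain c where c: "c \<in> (snd ` set xs - {a}) \<union> {b}"
      "B = label_block (relabel a b xs) c" using labels by auto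
    show "B \<in> (label_block xs ` snd ` set xs - {label_block xs a, label_block xs b})
        \<union> {label_block xs a \<union> label_block xs b}"
    proof (cases "c = b")
      case True then show ?thesis using c blocks by auto
    next
      case False
      then have "c \<in> snd ` set xs" "c \<noteq> a" using c by auto
      then have "label_block xs c \<notin> {label_block xs a, label_block xs b}"
        using label_block_inj[of c xs] False by blast
      then show ?thesis using c blocks False \<open>c \<in> snd ` set xs\<close> \<open>c \<noteq> a\<close> by auto
    qed
  next
    fix B assume B: "B \<in> (label_block xs ` snd ` set xs - {label_block xs a, label_block xs b})
        \<union> {label_block xs a \<union> label_block xs b}"
    show "B \<in> label_block (relabel a b xs) ` snd ` set (relabel a b xs)"
    proof (cases "B = label_block xs a \<union> label_block xs b")
      case True
      then have "B = label_block (relabel a b xs) b" using blocks by simp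
      then show ?thesis using labels by auto
    next
      case False
      then have B2: "B \<in> label_block xs ` snd ` set xs" "B \<noteq> label_block xs a"
        "B \<noteq> label_block xs b" using B by auto
      then obtain c where "c \<in> snd ` set xs" "B = label_block xs c" by blast
      moreover then have "c \<noteq> a" "c \<noteq> b" using B2 by auto
      ultimately have "B = label_block (relabel a b xs) c" using blocks by simp
      then show ?thesis
        using labels \<open>c \<in> snd ` set xs\<close> \<open>c \<noteq> a\<close> by blast
    qed
  qed
  then show ?thesis unfolding mfpart_of_def merge_blocks_def by simp
qed

lemma mfparts_eq_mfpart_of:
  assumes "(w, p) \<in> mfparts"
  obtains xs :: "('f::finite \<times> nat) list" where "xs \<noteq> []" "mfpart_of xs = (w, p)"
proof -
  have P: "partition_on {1..length w} p" and lw: "length w \<ge> 1"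
    using assms by (auto simp: mfparts_def)
  let ?n = "length w"
  have ex1: "\<exists>!B. B \<in> p \<and> i \<in> B" if "i \<in> {1..?n}" for i
  proof -
    have "i \<in> \<Union>p" using that by (simp only: partition_onD1[OF P, symmetric])
    then obtain B where B: "B \<in> p" "i \<in> B" by (rule UnionE)
    moreover have "B' = B" if "B' \<in> p" "i \<in> B'" for B'
      using partition_onD2[OF P] B that by (auto simp: disjoint_def)
    ultimately show ?thesis by blast
  qed
  define block where "block i = (THE B. B \<in> p \<and> i \<in> B)" for i
  have block: "block i \<in> p" "i \<in> block i" if "i \<in> {1..?n}" for i
    using theI'[OF ex1[OF that]] unfolding block_def by auto
  have block_eq: "block i = B" if "i \<in> {1..?n}" "B \<in> p" "i \<in> B" for i B
    using ex1[OF that(1)] block[OF that(1)] that(2,3) by blast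
  have Min_in_block: "Min B \<in> B" if "B \<in> p" for B
  proof (rule Min_in)
    show "finite B"
      using partition_onD1[OF P] that by (metis Union_upper finite_atLeastAtMost finite_subset)
    show "B \<noteq> {}" using partition_onD3[OF P] that by auto
  qed
  have Min_inj: "B1 = B2" if "B1 \<in> p" "B2 \<in> p" "Min B1 = Min B2" for B1 B2
    using Min_in_block[OF that(1)] Min_in_block[OF that(2)] that partition_onD2[OF P]
    by (auto simp: disjoint_def)
  define xs where "xs = map (\<lambda>i. (w!(i-1), Min (block i))) [1..<Suc ?n]"
  have len: "length xs = ?n" unfolding xs_def by (simp del: upt_Suc)
  have nth_xs: "xs!(i-1) = (w!(i-1), Min (block i))" if "i \<in> {1..?n}" for i
  proof -
    have "i - 1 < ?n" using that by auto
    then show ?thesis unfolding xs_def using that by (simp del: upt_Suc)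
  qed
  have faces: "map fst xs = w"
    unfolding xs_def using map_nth_pred_upt[of w] by (simp add: o_def del: upt_Suc)
  have labels: "snd ` set xs = Min ` p"
  proof (intro equalityI subsetI)
    fix l assume "l \<in> snd ` set xs"
    then obtain i where "i \<in> {1..?n}" "l = Min (block i)"
      unfolding xs_def by (auto simp: less_Suc_eq_le simp del: upt_Suc)
    then show "l \<in> Min ` p" using block by blast
  next
    fix l assume "l \<in> Min ` p"
    then obtain B where B: "B \<in> p" "l = Min B" by blast
    then have i: "Min B \<in> {1..?n}" "Min B \<in> B"
      using Min_in_block partition_onD1[OF P] by blast+
    then have "xs!(Min B - 1) \<in> set xs" using len by (intro nth_mem) auto
    then show "l \<in> snd ` set xs" using nth_xs[OF i(1)] block_eq[OF i(1) B(1) i(2)] B(2) by force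
  qed
  have "label_block xs (Min B) = B" if "B \<in> p" for B
  proof (intro equalityI subsetI)
    fix i assume "i \<in> label_block xs (Min B)"
    then have i: "i \<in> {1..?n}" "Min (block i) = Min B" using len nth_xs by auto
    then show "i \<in> B" using Min_inj[OF block(1)[OF i(1)] that] block(2)[OF i(1)] by simp
  next
    fix i assume "i \<in> B"
    then have "i \<in> {1..?n}" using partition_onD1[OF P] that by blast
    then show "i \<in> label_block xs (Min B)"
      using nth_xs block_eq[OF _ that \<open>i \<in> B\<close>] len by simp
  qed
  then have "label_block xs ` snd ` set xs = p" unfolding labels by (force simp: image_image)
  moreover have "xs \<noteq> []" using len lw by auto
  ultimately show ?thesis using that faces by (simp add: mfpart_of_def)
qed

lemma mfpart_of_nu1_word:
  assumes "x \<noteq> y"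
  shows "mfpart_of [(q,x), (q,y), (q,x)] = ([q,q,q], {{1,3}, {2}})"
proof -
  have "label_block [(q,x), (q,y), (q,x)] x = {1,3}" "label_block [(q,x), (q,y), (q,x)] y = {2}"
    using assms by (auto simp: le_Suc_eq)
  then show ?thesis unfolding mfpart_of_def by auto
qed

lemma mfpart_of_nu2_word:
  assumes "x \<noteq> y"
  shows "mfpart_of [(q,x), (q,y), (Q,y), (Q,x)] = ([q,q,Q,Q], {{1,4}, {2,3}})"
proof -
  have "label_block [(q,x), (q,y), (Q,y), (Q,x)] x = {1,4}"
    "label_block [(q,x), (q,y), (Q,y), (Q,x)] y = {2,3}"
    using assms by (auto simp: le_Suc_eq)
  then show ?thesis unfolding mfpart_of_def by auto
qed

lemma mfpart_of_xi2_word: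
  assumes "x \<noteq> y"
  shows "mfpart_of [(q,x), (q,y), (Q,x), (Q,y)] = ([q,q,Q,Q], {{1,3}, {2,4}})"
proof -
  have "label_block [(q,x), (q,y), (Q,x), (Q,y)] x = {1,3}"
    "label_block [(q,x), (q,y), (Q,x), (Q,y)] y = {2,4}"
    using assms by (auto simp: le_Suc_eq)
  then show ?thesis unfolding mfpart_of_def by auto
qed

lemma
  assumes "admissible a"
  shows admissible_one_block: "length w \<ge> 1 \<Longrightarrow> a (one_block w) = 1"
    and admissible_singletons: "a ([f1, f2], {{1}, {2}}) = 1"
    and admissible_reduce: "x \<in> mfparts \<Longrightarrow> a x = a (reduce x)"
    and admissible_merge_blocks:
      "(w, p) \<in> mfparts \<Longrightarrow> b1 \<in> p \<Longrightarrow> b2 \<in> p \<Longrightarrow> b1 \<noteq> b2 \<Longrightarrow>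
       i \<in> b1 \<Longrightarrow> i + 1 \<in> b2 \<Longrightarrow> face w i = face w (i + 1) \<Longrightarrow>
       a (w, p) = a (w, merge_blocks p b1 b2) * a (sub_part w (b1 \<union> b2) {b1, b2})"
    and admissible_outer_faces:
      "(w, p) \<in> mfparts \<Longrightarrow> length g = length w \<Longrightarrow>
       (\<And>l. 1 < l \<Longrightarrow> l < length w \<Longrightarrow> face w l = face g l) \<Longrightarrow> a (w, p) = a (g, p)"
proof -
  note A = assms[unfolded admissible_def]
  show "length w \<ge> 1 \<Longrightarrow> a (one_block w) = 1"
    by (rule A[THEN conjunct1, rule_format])
  show "a ([f1, f2], {{1}, {2}}) = 1"
    by (rule A[THEN conjunct2, THEN conjunct1, rule_format])
  show "x \<in> mfparts \<Longrightarrow> a x = a (reduce x)"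
    by (rule A[THEN conjunct2, THEN conjunct2, THEN conjunct1, rule_format])
  show "(w, p) \<in> mfparts \<Longrightarrow> b1 \<in> p \<Longrightarrow> b2 \<in> p \<Longrightarrow> b1 \<noteq> b2 \<Longrightarrow>
      i \<in> b1 \<Longrightarrow> i + 1 \<in> b2 \<Longrightarrow> face w i = face w (i + 1) \<Longrightarrow>
      a (w, p) = a (w, merge_blocks p b1 b2) * a (sub_part w (b1 \<union> b2) {b1, b2})"
    by (rule A[THEN conjunct2, THEN conjunct2, THEN conjunct2, THEN conjunct1, rule_format])
  show "(w, p) \<in> mfparts \<Longrightarrow> length g = length w \<Longrightarrow>
      (\<And>l. 1 < l \<Longrightarrow> l < length w \<Longrightarrow> face w l = face g l) \<Longrightarrow> a (w, p) = a (g, p)"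
    by (rule A[THEN conjunct2, THEN conjunct2, THEN conjunct2, THEN conjunct2, THEN conjunct1,
          rule_format]) simp_all
qed

lemma admissible_single_label:
  assumes "admissible a" "xs \<noteq> []" "\<forall>z\<in>set xs. snd z = l"
  shows "a (mfpart_of xs) = 1"
proof -
  have L: "snd ` set xs = {l}" using assms(2,3) by (cases xs) auto
  have "snd (xs!(i-1)) = l" if "i \<in> {1..length xs}" for i
    using assms(3) nth_mem[of "i - 1" xs] that by auto
  then have "label_block xs l = {1..length xs}" by blast
  then have "mfpart_of xs = one_block (map fst xs)" unfolding mfpart_of_def one_block_def L by simp
  then show ?thesis using admissible_one_block[OF assms(1)] assms(2) by (simp add: Suc_le_eq)
qed

lemma admissible_two_singletons:
  assumes "admissible a" "l1 \<noteq> l2"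
  shows "a (mfpart_of [(f,l1),(g,l2)]) = 1"
proof -
  have "label_block [(f,l1),(g,l2)] l1 = {1}" "label_block [(f,l1),(g,l2)] l2 = {2}"
    using assms(2) by (auto simp: le_Suc_eq numeral_2_eq_2)
  then have "mfpart_of [(f,l1),(g,l2)] = ([f,g], {{1},{2}})" unfolding mfpart_of_def by auto
  then show ?thesis using admissible_singletons[OF assms(1)] by simp
qed

lemma admissible_remdups_adj:
  assumes "admissible a" "xs \<noteq> []"
  shows "a (mfpart_of xs) = a (mfpart_of (remdups_adj xs))"
  using admissible_reduce[OF assms(1) mfpart_of_in_mfparts[OF assms(2)]]
    by (simp add: reduce_mfpart_of)

lemma admissible_remove_adjacent_dup:
  assumes "admissible a"
  shows "a (mfpart_of (us @ [z,z] @ vs)) = a (mfpart_of (us @ [z] @ vs))"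
proof -
  have "remdups_adj (us @ [z,z] @ vs) = remdups_adj (us @ [z] @ vs)"
    using remdups_adj_append[of us z "z # vs"] remdups_adj_append[of us z vs] by simp
  moreover have "us @ [z,z] @ vs \<noteq> []" "us @ [z] @ vs \<noteq> []" by simp_all
  ultimately show ?thesis using admissible_remdups_adj[OF assms] by metis
qed

lemma admissible_same_inner_faces:
  assumes "admissible a" "xs \<noteq> []" "length ys = length xs" "map snd ys = map snd xs"
    "\<forall>l. 1 < l \<and> l < length xs \<longrightarrow> fst (xs!(l-1)) = fst (ys!(l-1))"
  shows "a (mfpart_of xs) = a (mfpart_of ys)"
proof -
  have "snd (ys!(i-1)) = snd (xs!(i-1))" if "i \<in> {1..length xs}" for i
    using assms(3,4) that nth_map[of "i-1" ys snd] nth_map[of "i-1" xs snd] by auto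
  then have b: "label_block ys c = label_block xs c" for c using assms(3) by auto
  have L: "snd ` set ys = snd ` set xs" using assms(4) by (metis set_map)
  have m: "mfpart_of ys = (map fst ys, snd (mfpart_of xs))" unfolding mfpart_of_def b L by simp
  have "a (map fst xs, snd (mfpart_of xs)) = a (map fst ys, snd (mfpart_of xs))"
  proof (rule admissible_outer_faces[OF assms(1)])
    show "(map fst xs, snd (mfpart_of xs)) \<in> mfparts"
      using mfpart_of_in_mfparts[OF assms(2)] by (simp add: mfpart_of_def)
    show "length (map fst ys) = length (map fst xs)" using assms(3) by simp
    fix l assume "1 < l" "l < length (map fst xs)"
    then show "face (map fst xs) l = face (map fst ys) l" using assms(3,5) by auto
  qed
  then show ?thesis using m by (simp add: mfpart_of_def)
qed

lemma admissible_first_face: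
  assumes "admissible a"
  shows "a (mfpart_of ((f,l)#ys)) = a (mfpart_of ((g,l)#ys))"
proof (rule admissible_same_inner_faces[OF assms])
  show "\<forall>i. 1 < i \<and> i < length ((f,l)#ys) \<longrightarrow> fst (((f,l)#ys)!(i-1)) = fst (((g,l)#ys)!(i-1))"
    by (auto simp: nth_Cons')
qed simp_all

lemma admissible_last_face:
  assumes "admissible a"
  shows "a (mfpart_of (ys@[(f,l)])) = a (mfpart_of (ys@[(g,l)]))"
proof (rule admissible_same_inner_faces[OF assms])
  show "\<forall>i. 1 < i \<and> i < length (ys@[(f,l)]) \<longrightarrow>
      fst ((ys@[(f,l)])!(i-1)) = fst ((ys@[(g,l)])!(i-1))"
    by (auto simp: nth_append)
qed simp_all

lemma admissible_end_faces:
  assumes "admissible a"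
  shows "a (mfpart_of ((f,l) # ys @ [(g,m)])) = a (mfpart_of ((f',l) # ys @ [(g',m)]))"
  using admissible_first_face[OF assms, of f l "ys @ [(g,m)]" f']
    admissible_last_face[OF assms, of "(f',l) # ys" g m g'] by simp

lemma admissible_drop_first:
  assumes "admissible a"
  shows "a (mfpart_of ((f,l)#(g,l)#ys)) = a (mfpart_of ((g,l)#ys))"
  using admissible_first_face[OF assms, of f l "(g,l)#ys" g]
    admissible_remove_adjacent_dup[OF assms, of "[]" "(g,l)" ys] by simp

lemma admissible_drop_last:
  assumes "admissible a"
  shows "a (mfpart_of (ys@[(f,l),(g,l)])) = a (mfpart_of (ys@[(f,l)]))"
  using admissible_last_face[OF assms, of "ys@[(f,l)]" g l f]
    admissible_remove_adjacent_dup[OF assms, of ys "(f,l)" "[]"] by simp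

lemma admissible_collapse_first_run:
  assumes "admissible a" "us \<noteq> []" "\<forall>z\<in>set us. snd z = l"
  shows "a (mfpart_of (us @ vs)) = a (mfpart_of (last us # vs))"
  using assms(2,3)
proof (induction us)
  case (Cons u us)
  show ?case
  proof (cases us)
    case (Cons u' us')
    then have "a (mfpart_of ((u # us) @ vs)) = a (mfpart_of (us @ vs))"
      using admissible_drop_first[OF assms(1), of "fst u" l "fst u'" "us' @ vs"] Cons.prems
      by (cases u, cases u') simp
    then show ?thesis using Cons Cons.IH Cons.prems by simp
  qed simp
qed simp

lemma admissible_collapse_last_run:
  assumes "admissible a" "vs \<noteq> []" "\<forall>z\<in>set vs. snd z = l"
  shows "a (mfpart_of (us @ vs)) = a (mfpart_of (us @ [hd vs]))"
  using assms(2,3)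
proof (induction vs rule: rev_induct)
  case (snoc v vs)
  show ?case
  proof (cases vs rule: rev_cases)
    case (snoc vs' v')
    then have "a (mfpart_of (us @ vs @ [v])) = a (mfpart_of (us @ vs))"
      using admissible_drop_last[OF assms(1), of "us @ vs'" "fst v'" l "fst v"] snoc.prems
      by (cases v, cases v') simp
    then show ?thesis using snoc snoc.IH snoc.prems by (simp add: hd_append)
  qed simp
qed simp

lemma admissible_two_runs:
  assumes "admissible a" "us \<noteq> []" "\<forall>z\<in>set us. snd z = x" "vs \<noteq> []"
    "\<forall>z\<in>set vs. snd z = c" "x \<noteq> c"
  shows "a (mfpart_of (us @ vs)) = 1"
proof -
  have "a (mfpart_of (us @ vs)) = a (mfpart_of ([last us] @ [hd vs]))"
    using admissible_collapse_first_run[OF assms(1-3)] admissible_collapse_last_run[OF assms(1,4,5)]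
    by simp
  also have "\<dots> = 1"
  proof -
    have "[last us] @ [hd vs] = [(fst (last us), x), (fst (hd vs), c)]"
      using assms(2-5) by (simp add: prod_eq_iff last_in_set hd_in_set)
    then show ?thesis using admissible_two_singletons[OF assms(1) assms(6)] by (simp only:)
  qed
  finally show ?thesis .
qed

lemma admissible_merge:
  assumes "admissible a" "xs = us @ [(f,l1),(f,l2)] @ vs" "l1 \<noteq> l2" "{a1,b1} = {l1,l2}"
  shows "a (mfpart_of xs) = a (mfpart_of (relabel a1 b1 xs))
      * a (mfpart_of (filter (\<lambda>z. snd z \<in> {l1,l2}) xs))"
proof -
  let ?w = "map fst xs" and ?p = "snd (mfpart_of xs)"
  have l1: "l1 \<in> snd ` set xs" and l2: "l2 \<in> snd ` set xs" using assms(2) by auto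
  have i1: "Suc (length us) \<in> label_block xs l1" and i2: "Suc (Suc (length us)) \<in> label_block xs l2"
    using assms(2) by (auto simp: nth_append)
  have ne: "label_block xs l1 \<noteq> label_block xs l2"
    using label_block_inj[OF l1] assms(3) by blast
  have fa: "face ?w (Suc (length us)) = face ?w (Suc (length us) + 1)"
    using assms(2) by (simp add: nth_append)
  have inp: "label_block xs l1 \<in> ?p" "label_block xs l2 \<in> ?p"
    using l1 l2 by (auto simp: mfpart_of_def)
  have mf: "(?w, ?p) \<in> mfparts"
    using mfpart_of_in_mfparts[of xs] assms(2) by (simp add: mfpart_of_def)
  have "a (?w, ?p) = a (?w, merge_blocks ?p (label_block xs l1) (label_block xs l2))
      * a (sub_part ?w (label_block xs l1 \<union> label_block xs l2)
             {label_block xs l1, label_block xs l2})"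
    using admissible_merge_blocks[OF assms(1) mf inp ne i1 _ fa] i2 by simp
  moreover have "merge_blocks ?p (label_block xs l1) (label_block xs l2)
      = merge_blocks ?p (label_block xs a1) (label_block xs b1)"
    using assms(4) by (auto simp: merge_blocks_def doubleton_eq_iff)
  moreover have "(?w, merge_blocks ?p (label_block xs a1) (label_block xs b1))
      = mfpart_of (relabel a1 b1 xs)"
  proof -
    have "a1 \<in> snd ` set xs" "b1 \<in> snd ` set xs" "a1 \<noteq> b1" using l1 l2 assms(3,4)
      by (auto simp: doubleton_eq_iff)
    from merge_blocks_mfpart_of[OF this] show ?thesis by simp
  qed
  moreover have "sub_part ?w (label_block xs l1 \<union> label_block xs l2)
      {label_block xs l1, label_block xs l2}
      = mfpart_of (filter (\<lambda>z. snd z \<in> {l1,l2}) xs)"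
  proof -
    have "label_block xs l1 \<union> label_block xs l2
        = {i\<in>{1..length xs}. snd (xs!(i-1)) \<in> {l1,l2}}" by auto
    moreover have "{label_block xs l1, label_block xs l2} = label_block xs ` {l1,l2}" by auto
    ultimately show ?thesis using sub_part_filter_labels[of "{l1,l2}" xs] l1 l2 by simp
  qed
  ultimately show ?thesis by (simp add: mfpart_of_def)
qed

section \<open>Factorisation through a fresh label\<close>

lemma relabel_id: "\<forall>z\<in>set xs. snd z \<noteq> c \<Longrightarrow> relabel c b xs = xs"
  by (induction xs) auto

lemma relabel_fresh_back: "\<forall>z\<in>set xs. snd z \<noteq> c \<Longrightarrow>
    relabel c x (relabel x c xs) = xs"
  by (induction xs) auto

lemma relabel_single_label:
  "\<forall>z\<in>set xs. snd z = a \<Longrightarrow> relabel a b xs = map (\<lambda>z. (fst z, b)) xs"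
  by (induction xs) auto

lemma relabel_fresh_merge:
  "\<forall>z\<in>set xs. snd z \<in> {x,y} \<Longrightarrow> relabel c y (relabel x c xs) = map (\<lambda>z. (fst z, y)) xs"
  by (induction xs) auto

lemma labels_relabel_fresh: "\<forall>z\<in>set xs. snd z \<in> {x,y} \<Longrightarrow>
    \<forall>z\<in>set (relabel x c xs). snd z \<in> {c,y}"
  by (induction xs) auto

text \<open>Each factorisation below inserts a letter with a fresh label c, giving an auxiliary word
  \<sigma> to which (iv) applies at two places: at the first it gives back the original word, since
  the restriction of \<sigma> to the two merged labels consists of two runs and has weight 1; at the
  second it gives the two claimed factors.\<close>

lemma admissible_remove_fresh_label:
  assumes "admissible a" and \<sigma>: "\<sigma> = us @ [(g,l1),(g,l2)] @ vs" and "{l1, l2} = {l, c}" "l \<noteq> c"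
    and "relabel c l \<sigma> = us' @ [(g,l),(g,l)] @ vs'"
    and "filter (\<lambda>z. snd z \<in> {l1, l2}) \<sigma> = rs1 @ rs2" "rs1 \<noteq> []" "\<forall>z\<in>set rs1. snd z = m"
      "rs2 \<noteq> []" "\<forall>z\<in>set rs2. snd z = m'" "m \<noteq> m'"
  shows "a (mfpart_of \<sigma>) = a (mfpart_of (us' @ [(g,l)] @ vs'))"
proof -
  have "l1 \<noteq> l2" "{c, l} = {l1, l2}" using assms(3,4) by (auto simp: doubleton_eq_iff)
  from admissible_merge[OF assms(1) \<sigma> this]
  have "a (mfpart_of \<sigma>) = a (mfpart_of (relabel c l \<sigma>)) * a (mfpart_of (rs1 @ rs2))"
    using assms(6) by simp
  also have "\<dots> = a (mfpart_of (us' @ [(g,l)] @ vs'))"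
    using assms(5) admissible_remove_adjacent_dup[OF assms(1)]
      admissible_two_runs[OF assms(1) assms(7-11)] by simp
  finally show ?thesis .
qed

lemma admissible_factor_three_runs:
  assumes adm: "admissible a" and xy: "x \<noteq> y" "c \<noteq> x" "c \<noteq> y"
    and Y1: "Y1 = (q,y) # Y1t" "Y1 = Y1a @ [(g,y)]" "\<forall>z\<in>set Y1. snd z = y"
    and Y2: "Y2 \<noteq> []" "\<forall>z\<in>set Y2. snd z = y"
  shows "a (mfpart_of ((f1,x) # Y1 @ Y2 @ [(fn,x)])) =
         a (mfpart_of ((q,x) # map (\<lambda>z. (fst z, x)) Y1 @ [(g,c)] @ relabel y c Y2 @ [(fn,x)])) *
         a (mfpart_of ((q,x) # Y1 @ [(fn,x)]))"
proof -
  have Y2c: "\<forall>z\<in>set (relabel y c Y2). snd z = c" using Y2(2) by (induction Y2) auto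
  have Y1a: "\<forall>z\<in>set Y1a. snd z \<noteq> c" using Y1(2,3) xy by auto
  have Y2nc: "\<forall>z\<in>set Y2. snd z \<noteq> c" using Y2(2) xy by auto
  define \<sigma> where "\<sigma> = (q,x) # Y1 @ [(g,c)] @ relabel y c Y2 @ [(fn,x)]"
  have "a (mfpart_of ((f1,x) # Y1 @ Y2 @ [(fn,x)])) = a (mfpart_of ((q,x) # Y1 @ Y2 @ [(fn,x)]))"
    by (rule admissible_first_face[OF adm])
  also have "\<dots> = a (mfpart_of \<sigma>)"
  proof -
    have "a (mfpart_of \<sigma>) = a (mfpart_of (((q,x) # Y1a) @ [(g,y)] @ (Y2 @ [(fn,x)])))"
    proof (rule admissible_remove_fresh_label[where m = y and m' = c, OF adm])
      show "\<sigma> = ((q,x) # Y1a) @ [(g,y),(g,c)] @ (relabel y c Y2 @ [(fn,x)])"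
        unfolding \<sigma>_def using Y1 by simp
      show "relabel c y \<sigma> = ((q,x) # Y1a) @ [(g,y),(g,y)] @ (Y2 @ [(fn,x)])"
        unfolding \<sigma>_def Y1(2) using relabel_id[OF Y1a] relabel_fresh_back[OF Y2nc] xy by simp
      show "filter (\<lambda>z. snd z \<in> {y,c}) \<sigma> = Y1 @ ((g,c) # relabel y c Y2)"
        unfolding \<sigma>_def using Y1(3) Y2c xy by (simp add: filter_True)
    qed (use Y1 Y2c xy in auto)
    then show ?thesis using Y1(2) by simp
  qed
  also have "\<dots> = a (mfpart_of (relabel y x \<sigma>)) * a (mfpart_of (filter (\<lambda>z. snd z \<in> {x,y}) \<sigma>))"
    by (rule admissible_merge[OF adm, of _ "[]" q x y "Y1t @ [(g,c)] @ relabel y c Y2 @ [(fn,x)]"])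
      (use xy Y1(1) in \<open>auto simp: \<sigma>_def\<close>)
  also have "relabel y x \<sigma> = (q,x) # map (\<lambda>z. (fst z, x)) Y1 @ [(g,c)] @ relabel y c Y2 @ [(fn,x)]"
    using Y2c xy unfolding \<sigma>_def by (simp add: relabel_single_label[OF Y1(3)] relabel_id)
  also have "filter (\<lambda>z. snd z \<in> {x,y}) \<sigma> = (q,x) # Y1 @ [(fn,x)]"
    unfolding \<sigma>_def using Y1(3) Y2c xy by (simp add: filter_True filter_False)
  finally show ?thesis .
qed

lemma admissible_factor_four_runs_long_second:
  assumes adm: "admissible a" and xy: "x \<noteq> y" "c \<noteq> x" "c \<noteq> y"
    and Ys: "Ys = (q,y) # Yt" "Ys = Ya @ [(g,y)]" "\<forall>z\<in>set Ys. snd z = y"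
    and Xs: "\<forall>z\<in>set Xs. snd z = x"
  shows "a (mfpart_of ((f1,x) # Ys @ Xs @ [(fn,y)])) =
         a (mfpart_of ((q,x) # map (\<lambda>z. (fst z, x)) Ys @ [(g,c)] @ Xs @ [(fn,c)])) *
         a (mfpart_of ((q,x) # Ys @ Xs))"
proof -
  have Xnc: "\<forall>z\<in>set Xs. snd z \<noteq> c" "\<forall>z\<in>set Xs. snd z \<noteq> y" using Xs xy by auto
  have Ya: "\<forall>z\<in>set Ya. snd z \<noteq> c" using Ys(2,3) xy by auto
  define \<sigma> where "\<sigma> = (q,x) # Ys @ [(g,c)] @ Xs @ [(fn,c)]"
  have "a (mfpart_of ((f1,x) # Ys @ Xs @ [(fn,y)])) = a (mfpart_of ((q,x) # Ys @ Xs @ [(fn,y)]))"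
    by (rule admissible_first_face[OF adm])
  also have "\<dots> = a (mfpart_of \<sigma>)"
  proof -
    have "a (mfpart_of \<sigma>) = a (mfpart_of (((q,x) # Ya) @ [(g,y)] @ (Xs @ [(fn,y)])))"
    proof (rule admissible_remove_fresh_label[where m = y and m' = c, OF adm])
      show "\<sigma> = ((q,x) # Ya) @ [(g,y),(g,c)] @ (Xs @ [(fn,c)])"
        unfolding \<sigma>_def using Ys by simp
      show "relabel c y \<sigma> = ((q,x) # Ya) @ [(g,y),(g,y)] @ (Xs @ [(fn,y)])"
        unfolding \<sigma>_def Ys(2) using relabel_id[OF Ya] relabel_id[OF Xnc(1)] xy by simp
      show "filter (\<lambda>z. snd z \<in> {y,c}) \<sigma> = Ys @ [(g,c),(fn,c)]"
        unfolding \<sigma>_def using Ys(3) Xnc xy by (simp add: filter_True filter_False)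
    qed (use Ys xy in auto)
    then show ?thesis using Ys(2) by simp
  qed
  also have "\<dots> = a (mfpart_of (relabel y x \<sigma>)) * a (mfpart_of (filter (\<lambda>z. snd z \<in> {x,y}) \<sigma>))"
    by (rule admissible_merge[OF adm, of _ "[]" q x y "Yt @ [(g,c)] @ Xs @ [(fn,c)]"])
      (use xy Ys(1) in \<open>auto simp: \<sigma>_def\<close>)
  also have "relabel y x \<sigma> = (q,x) # map (\<lambda>z. (fst z, x)) Ys @ [(g,c)] @ Xs @ [(fn,c)]"
    unfolding \<sigma>_def using relabel_single_label[OF Ys(3)] relabel_id[OF Xnc(2)] xy by simp
  also have "filter (\<lambda>z. snd z \<in> {x,y}) \<sigma> = (q,x) # Ys @ Xs"
    unfolding \<sigma>_def using Ys(3) Xs xy by (simp add: filter_True)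
  finally show ?thesis .
qed

lemma admissible_factor_four_runs_long_third:
  assumes adm: "admissible a" and xy: "x \<noteq> y" "c \<noteq> x" "c \<noteq> y"
    and Xs: "Xs = (h,x) # Xt" "Xs = Xa @ [(e,x)]" "\<forall>z\<in>set Xs. snd z = x"
  shows "a (mfpart_of ((f1,x) # (q,y) # Xs @ [(fn,y)])) =
         a (mfpart_of ((f1,c) # (q,x) # (h,c) # Xs @ [(e,x)])) *
         a (mfpart_of ((q,y) # Xs @ [(e,y)]))"
proof -
  have Xnc: "\<forall>z\<in>set Xs. snd z \<noteq> c" "\<forall>z\<in>set Xs. snd z \<noteq> y" using Xs xy by auto
  define \<sigma> where "\<sigma> = (f1,c) # (q,y) # (h,c) # Xs @ [(e,y)]"
  have "a (mfpart_of (((f1,x) # (q,y) # Xs) @ [(fn,y)]))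
      = a (mfpart_of (((f1,x) # (q,y) # Xs) @ [(e,y)]))"
    by (rule admissible_last_face[OF adm])
  also have "\<dots> = a (mfpart_of \<sigma>)"
  proof -
    have "a (mfpart_of \<sigma>) = a (mfpart_of ([(f1,x),(q,y)] @ [(h,x)] @ (Xt @ [(e,y)])))"
    proof (rule admissible_remove_fresh_label[where m = c and m' = x, OF adm])
      show "\<sigma> = [(f1,c),(q,y)] @ [(h,c),(h,x)] @ (Xt @ [(e,y)])"
        unfolding \<sigma>_def using Xs by simp
      show "relabel c x \<sigma> = [(f1,x),(q,y)] @ [(h,x),(h,x)] @ (Xt @ [(e,y)])"
        unfolding \<sigma>_def using relabel_id[OF Xnc(1)] Xs xy by auto
      show "filter (\<lambda>z. snd z \<in> {c,x}) \<sigma> = [(f1,c),(h,c)] @ Xs"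
        unfolding \<sigma>_def using Xs(3) xy by (simp add: filter_True)
    qed (use Xs xy in auto)
    then show ?thesis using Xs(1) by simp
  qed
  also have "\<dots> = a (mfpart_of (relabel y x \<sigma>)) * a (mfpart_of (filter (\<lambda>z. snd z \<in> {x,y}) \<sigma>))"
    by (rule admissible_merge[OF adm, of _ "(f1,c) # (q,y) # (h,c) # Xa" e x y "[]"])
      (use xy Xs(2) in \<open>auto simp: \<sigma>_def\<close>)
  also have "relabel y x \<sigma> = (f1,c) # (q,x) # (h,c) # Xs @ [(e,x)]"
    unfolding \<sigma>_def using relabel_id[OF Xnc(2)] xy by simp
  also have "filter (\<lambda>z. snd z \<in> {x,y}) \<sigma> = (q,y) # Xs @ [(e,y)]"
    unfolding \<sigma>_def using Xs(3) xy by (simp add: filter_True)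
  finally show ?thesis by simp
qed

lemma admissible_factor_many_runs:
  assumes adm: "admissible a" and xy: "x \<noteq> y" "c \<noteq> x" "c \<noteq> y"
    and S: "\<forall>z\<in>set S. snd z \<in> {x,y}" "S = S0 @ [(h1,m1),(h2,m2)]" "m1 \<noteq> m2"
    and P0: "\<forall>z\<in>set P0. snd z \<noteq> c"
  defines "S' \<equiv> S0 @ [(h1,m1),(h1,m2)]"
  shows "a (mfpart_of (P0 @ [(g,x)] @ S)) =
         a (mfpart_of (P0 @ [(g,x),(g,y)] @ map (\<lambda>z. (fst z, y)) S')) *
         a (mfpart_of (filter (\<lambda>z. snd z \<in> {y,c}) P0 @ [(g,c)] @ relabel x c S'))"
proof -
  have S'l: "\<forall>z\<in>set S'. snd z \<in> {x,y}" using S unfolding S'_def by auto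
  have S'c: "\<forall>z\<in>set S'. snd z \<noteq> c" using S'l xy by auto
  define m1' where "m1' = (if m1 = x then c else m1)"
  define m2' where "m2' = (if m2 = x then c else m2)"
  have m': "m1' \<noteq> m2'" "{c,y} = {m1',m2'}"
    using S xy unfolding m1'_def m2'_def by auto
  define \<sigma> where "\<sigma> = P0 @ [(g,x),(g,c)] @ relabel x c S'"
  have "a (mfpart_of ((P0 @ [(g,x)] @ S0 @ [(h1,m1)]) @ [(h2,m2)]))
      = a (mfpart_of ((P0 @ [(g,x)] @ S0 @ [(h1,m1)]) @ [(h1,m2)]))"
    by (rule admissible_last_face[OF adm])
  then have "a (mfpart_of (P0 @ [(g,x)] @ S)) = a (mfpart_of (P0 @ [(g,x)] @ S'))"
    unfolding S(2) S'_def by simp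
  also have "\<dots> = a (mfpart_of \<sigma>)"
  proof (rule admissible_remove_fresh_label[where m = x and m' = c, OF adm, symmetric])
    show "\<sigma> = P0 @ [(g,x),(g,c)] @ relabel x c S'" by (rule \<sigma>_def)
    show "relabel c x \<sigma> = P0 @ [(g,x),(g,x)] @ S'"
      unfolding \<sigma>_def using relabel_id[OF P0] relabel_fresh_back[OF S'c] by simp
    show "filter (\<lambda>z. snd z \<in> {x,c}) \<sigma> = (filter (\<lambda>z. snd z = x) P0 @ [(g,x)])
        @ ((g,c) # filter (\<lambda>z. snd z \<in> {x,c}) (relabel x c S'))"
      unfolding \<sigma>_def using P0 xy by (auto intro: filter_cong)
    show "\<forall>z\<in>set ((g,c) # filter (\<lambda>z. snd z \<in> {x,c}) (relabel x c S')). snd z = c"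
      using labels_relabel_fresh[OF S'l, of c] xy by auto
  qed (use xy in auto)
  also have "\<dots> = a (mfpart_of (relabel c y \<sigma>)) * a (mfpart_of (filter (\<lambda>z. snd z \<in> {m1',m2'}) \<sigma>))"
  proof -
    have "\<sigma> = (P0 @ [(g,x),(g,c)] @ relabel x c S0) @ [(h1,m1'),(h1,m2')] @ []"
      unfolding \<sigma>_def S'_def m1'_def m2'_def by simp
    from admissible_merge[OF adm this m'] show ?thesis .
  qed
  also have "relabel c y \<sigma> = P0 @ [(g,x),(g,y)] @ map (\<lambda>z. (fst z, y)) S'"
    unfolding \<sigma>_def using relabel_id[OF P0] relabel_fresh_merge[OF S'l] xy by simp
  also have "filter (\<lambda>z. snd z \<in> {m1',m2'}) \<sigma>
      = filter (\<lambda>z. snd z \<in> {y,c}) P0 @ [(g,c)] @ relabel x c S'"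
  proof -
    have "filter (\<lambda>z. snd z \<in> {c,y}) (relabel x c S') = relabel x c S'"
      using labels_relabel_fresh[OF S'l, of c] by (auto intro: filter_True)
    then show ?thesis unfolding \<sigma>_def m'(2)[symmetric] using xy by (simp add: insert_commute)
  qed
  finally show ?thesis .
qed

section \<open>A well-founded order on labelled words\<close>

definition num_labels :: "('f \<times> 'l) list \<Rightarrow> nat" where
  "num_labels xs = card (snd ` set xs)"

definition num_runs :: "('f \<times> 'l) list \<Rightarrow> nat" where
  "num_runs xs = length (remdups_adj (map snd xs))"

definition inner_length :: "('f \<times> 'l) list \<Rightarrow> nat" where
  "inner_length xs = length xs - length (takeWhile (\<lambda>z. snd z = snd (hd xs)) xs)
                     - length (takeWhile (\<lambda>z. snd z = snd (last xs)) (rev xs))"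

text \<open>Merging two labels lowers \<^const>\<open>num_labels\<close>, the fresh-label factorisations of
  two-label words lower \<^const>\<open>num_runs\<close> or \<^const>\<open>inner_length\<close>, and dropping a
  repeated end letter lowers the length.\<close>

definition word_less :: "((('f \<times> 'l) list) \<times> ('f \<times> 'l) list) set" where
  "word_less = measures [num_labels, num_runs, inner_length, length]"

lemma wf_word_less: "wf word_less"
  by (simp add: word_less_def)

lemma word_less_by_labels: "num_labels ys < num_labels xs \<Longrightarrow> (ys, xs) \<in> word_less"
  unfolding word_less_def by (rule measures_less)

lemma word_less_by_runs:
  "num_labels ys \<le> num_labels xs \<Longrightarrow> num_runs ys < num_runs xs \<Longrightarrow> (ys, xs) \<in> word_less"
  unfolding word_less_def by (rule measures_lesseq, assumption, rule measures_less)

lemma word_less_by_inner_length: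
  "num_labels ys \<le> num_labels xs \<Longrightarrow> num_runs ys \<le> num_runs xs \<Longrightarrow>
   inner_length ys < inner_length xs \<Longrightarrow> (ys, xs) \<in> word_less"
  unfolding word_less_def
  by (rule measures_lesseq, assumption, rule measures_lesseq, assumption, rule measures_less)

lemma word_less_by_length:
  "num_labels ys \<le> num_labels xs \<Longrightarrow> num_runs ys \<le> num_runs xs \<Longrightarrow>
   inner_length ys \<le> inner_length xs \<Longrightarrow> length ys < length xs \<Longrightarrow> (ys, xs) \<in> word_less"
  unfolding word_less_def
  by (rule measures_lesseq, assumption, rule measures_lesseq, assumption, rule measures_lesseq,
      assumption, rule measures_less)

lemma num_labels_le_2:
  assumes "\<forall>z\<in>set xs. snd z \<in> {u,v}"
  shows "num_labels xs \<le> 2"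
proof -
  have "card (snd ` set xs) \<le> card {u,v}" by (rule card_mono) (use assms in auto)
  also have "\<dots> \<le> 2" by (simp add: card_insert_le_m1)
  finally show ?thesis by (simp add: num_labels_def)
qed

lemma two_le_num_labels:
  assumes "z1 \<in> set xs" "z2 \<in> set xs" "snd z1 \<noteq> snd z2"
  shows "2 \<le> num_labels xs"
proof -
  have "{snd z1, snd z2} \<subseteq> snd ` set xs" using assms(1,2) by auto
  then have "card {snd z1, snd z2} \<le> num_labels xs"
    unfolding num_labels_def by (rule card_mono[rotated]) simp
  then show ?thesis using assms(3) by simp
qed

lemma num_labels_le_1_single_label:
  assumes "num_labels xs \<le> 1" "xs \<noteq> []"
  shows "\<forall>z\<in>set xs. snd z = snd (hd xs)"
proof -
  have "card (snd ` set xs) \<le> Suc 0" using assms(1) by (simp add: num_labels_def)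
  then have "\<forall>u\<in>snd ` set xs. \<forall>v\<in>snd ` set xs. u = v"
    using card_le_Suc0_iff_eq[of "snd ` set xs"] by blast
  then show ?thesis using hd_in_set[OF assms(2)] by blast
qed

lemma num_labels_eq_2_labels:
  assumes "num_labels xs = 2" "z1 \<in> set xs" "z2 \<in> set xs" "snd z1 \<noteq> snd z2"
  shows "\<forall>z\<in>set xs. snd z \<in> {snd z1, snd z2}"
proof -
  have "{snd z1, snd z2} \<subseteq> snd ` set xs" using assms(2,3) by auto
  moreover have "card {snd z1, snd z2} = card (snd ` set xs)"
    using assms(1,4) by (simp add: num_labels_def)
  ultimately have "{snd z1, snd z2} = snd ` set xs" by (intro card_subset_eq) auto
  then show ?thesis by auto
qed

lemma ex_other_label:
  assumes "num_labels xs \<ge> 2"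
  shows "\<exists>z\<in>set xs. snd z \<noteq> l"
proof (rule ccontr)
  assume "\<not> ?thesis"
  then have "snd ` set xs \<subseteq> {l}" by auto
  then have "card (snd ` set xs) \<le> card {l}" by (rule card_mono[rotated]) simp
  then have "card (snd ` set xs) \<le> 1" by simp
  then show False using assms by (simp add: num_labels_def)
qed

lemma remdups_adj_map_inj_on:
  "inj_on f (set xs) \<Longrightarrow> remdups_adj (map f xs) = map f (remdups_adj xs)"
proof (induction xs rule: remdups_adj.induct)
  case (3 x y xs)
  then have "f x = f y \<longleftrightarrow> x = y" by (auto dest: inj_onD)
  then show ?case using 3 by (auto simp: inj_on_insert)
qed simp_all

lemma num_runs_singleton [simp]: "num_runs [z] = 1"
  by (simp add: num_runs_def)

lemma num_runs_single_label:
  assumes "xs \<noteq> []" "\<forall>z\<in>set xs. snd z = l"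
  shows "num_runs xs = 1"
proof -
  have "map snd xs = replicate (length xs) l"
    using assms(2) by (simp add: map_replicate_const[symmetric] map_eq_conv)
  then show ?thesis using assms(1) by (simp add: num_runs_def remdups_adj_replicate)
qed

lemma num_runs_append:
  "us \<noteq> [] \<Longrightarrow> vs \<noteq> [] \<Longrightarrow> snd (last us) \<noteq> snd (hd vs) \<Longrightarrow>
   num_runs (us @ vs) = num_runs us + num_runs vs"
  unfolding num_runs_def by (simp add: remdups_adj_append' last_map hd_map)

lemma num_runs_Cons_run:
  "us \<noteq> [] \<Longrightarrow> \<forall>z\<in>set us. snd z = l \<Longrightarrow> vs \<noteq> [] \<Longrightarrow> snd (hd vs) \<noteq> l \<Longrightarrow>
   num_runs (us @ vs) = 1 + num_runs vs"
  using num_runs_append[of us vs] num_runs_single_label[of us l] by simp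

lemma num_runs_relabel:
  assumes "\<forall>z\<in>set xs. snd z \<noteq> b"
  shows "num_runs (relabel a b xs) = num_runs xs"
proof -
  let ?f = "\<lambda>l. if l = a then b else l"
  have m: "map snd (relabel a b xs) = map ?f (map snd xs)" by (simp add: relabel_def)
  have i: "inj_on ?f (set (map snd xs))" using assms by (auto simp: inj_on_def)
  show ?thesis unfolding num_runs_def m remdups_adj_map_inj_on[OF i] length_map ..
qed

lemma num_runs_map_snd: "map snd xs = map snd ys \<Longrightarrow> num_runs xs = num_runs ys"
  by (simp add: num_runs_def)

lemma inner_length_eq:
  assumes "us \<noteq> []" "\<forall>z\<in>set us. snd z = lu" "vs \<noteq> []" "\<forall>z\<in>set vs. snd z = lv"
    "mid \<noteq> []" "snd (hd mid) \<noteq> lu" "snd (last mid) \<noteq> lv"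
  shows "inner_length (us @ mid @ vs) = length mid"
proof -
  have h: "snd (hd (us @ mid @ vs)) = lu" using assms(1,2) by (cases us) auto
  have l: "snd (last (us @ mid @ vs)) = lv" using assms(3,4) by simp
  have t1: "takeWhile (\<lambda>z. snd z = lu) (us @ mid @ vs) = us"
  proof -
    have "takeWhile (\<lambda>z. snd z = lu) (mid @ vs) = []" using assms(5,6) by (cases mid) auto
    then show ?thesis using assms(2) by simp
  qed
  have t2: "takeWhile (\<lambda>z. snd z = lv) (rev (us @ mid @ vs)) = rev vs"
  proof -
    have "takeWhile (\<lambda>z. snd z = lv) (rev mid @ rev us) = []" using assms(5,7)
      by (cases mid rule: rev_cases) auto
    moreover have "takeWhile (\<lambda>z. snd z = lv) (rev vs @ (rev mid @ rev us))
        = rev vs @ takeWhile (\<lambda>z. snd z = lv) (rev mid @ rev us)"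
      by (rule takeWhile_append2) (use assms(4) in auto)
    ultimately show ?thesis by simp
  qed
  show ?thesis unfolding inner_length_def h l t1 t2 by simp
qed

lemma word_less_drop_first:
  assumes "snd z1 = snd z2" "num_labels (z1#z2#ys) \<ge> 2"
  shows "(z2#ys, z1#z2#ys) \<in> word_less"
proof (rule word_less_by_length)
  have L: "snd ` set (z1#z2#ys) = snd ` set (z2#ys)" using assms(1) by auto
  show "num_labels (z2#ys) \<le> num_labels (z1#z2#ys)" unfolding num_labels_def L ..
  show "num_runs (z2#ys) \<le> num_runs (z1#z2#ys)" unfolding num_runs_def using assms(1) by simp
  show "length (z2#ys) < length (z1#z2#ys)" by simp
  have n2: "num_labels (z2#ys) \<ge> 2" using assms(2) unfolding num_labels_def L .
  obtain u where u: "u \<in> set (z2#ys)" "snd u \<noteq> snd (last (z2#ys))"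
    using ex_other_label[OF n2] by blast
  have t1: "takeWhile (\<lambda>z. snd z = snd (hd (z1#z2#ys))) (z1#z2#ys)
      = z1 # takeWhile (\<lambda>z. snd z = snd (hd (z2#ys))) (z2#ys)"
    using assms(1) by simp
  have t2: "takeWhile (\<lambda>z. snd z = snd (last (z1#z2#ys))) (rev (z1#z2#ys))
      = takeWhile (\<lambda>z. snd z = snd (last (z2#ys))) (rev (z2#ys))"
  proof -
    have e1: "rev (z1#z2#ys) = rev (z2#ys) @ [z1]" by simp
    have e2: "last (z1#z2#ys) = last (z2#ys)" by simp
    have ur: "u \<in> set (rev (z2#ys))" using u by simp
    show ?thesis unfolding e1 e2 by (rule takeWhile_append1[OF ur]) (use u(2) in simp)
  qed
  show "inner_length (z2#ys) \<le> inner_length (z1#z2#ys)" unfolding inner_length_def t1 t2 by simp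
qed

lemma word_less_drop_last:
  assumes "snd w1 = snd w2" "num_labels (zs@[w1,w2]) \<ge> 2"
  shows "(zs@[w1], zs@[w1,w2]) \<in> word_less"
proof (rule word_less_by_length)
  have L: "snd ` set (zs@[w1,w2]) = snd ` set (zs@[w1])" using assms(1) by auto
  show "num_labels (zs@[w1]) \<le> num_labels (zs@[w1,w2])" unfolding num_labels_def L ..
  show "num_runs (zs@[w1]) \<le> num_runs (zs@[w1,w2])" unfolding num_runs_def using assms(1)
    by (simp add: remdups_adj_append_two)
  show "length (zs@[w1]) < length (zs@[w1,w2])" by simp
  have n2: "num_labels (zs@[w1]) \<ge> 2" using assms(2) unfolding num_labels_def L .
  obtain u where u: "u \<in> set (zs@[w1])" "snd u \<noteq> snd (hd (zs@[w1]))"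
    using ex_other_label[OF n2] by blast
  have t1: "takeWhile (\<lambda>z. snd z = snd (hd (zs@[w1,w2]))) (zs@[w1,w2])
      = takeWhile (\<lambda>z. snd z = snd (hd (zs@[w1]))) (zs@[w1])"
  proof -
    have e1: "zs@[w1,w2] = (zs@[w1]) @ [w2]" by simp
    have e2: "hd (zs@[w1,w2]) = hd (zs@[w1])" by (cases zs) auto
    show ?thesis unfolding e2 unfolding e1 by (rule takeWhile_append1[OF u(1)]) (use u(2) in simp)
  qed
  have t2: "takeWhile (\<lambda>z. snd z = snd (last (zs@[w1,w2]))) (rev (zs@[w1,w2]))
      = w2 # takeWhile (\<lambda>z. snd z = snd (last (zs@[w1]))) (rev (zs@[w1]))"
    using assms(1) by simp
  show "inner_length (zs@[w1]) \<le> inner_length (zs@[w1,w2])"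
    unfolding inner_length_def t1 t2 by simp
qed

definition splits_into :: "('f::finite \<times> 'l) list \<Rightarrow> ('f \<times> 'l) list list \<Rightarrow> bool" where
  "splits_into xs ps \<longleftrightarrow>
      (\<forall>p\<in>set ps. p \<noteq> [] \<and> (p, xs) \<in> word_less) \<and>
     (\<forall>a. admissible a \<longrightarrow> a (mfpart_of xs) = (\<Prod>p\<leftarrow>ps. a (mfpart_of p)))"

lemma splits_into_single:
  assumes "p \<noteq> []" "(p, xs) \<in> word_less"
    "\<And>a. admissible a \<Longrightarrow> a (mfpart_of xs) = a (mfpart_of p)"
  shows "splits_into xs [p]"
  using assms by (simp add: splits_into_def)

lemma splits_into_pair:
  assumes "p1 \<noteq> []" "p2 \<noteq> []" "(p1, xs) \<in> word_less" "(p2, xs) \<in> word_less"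
    "\<And>a. admissible a \<Longrightarrow> a (mfpart_of xs) = a (mfpart_of p1) * a (mfpart_of p2)"
  shows "splits_into xs [p1, p2]"
  using assms by (simp add: splits_into_def)

lemma splits_drop_first:
  fixes z1 z2 :: "'f::finite \<times> 'l"
  assumes "snd z1 = snd z2" "2 \<le> num_labels (z1 # z2 # ys)"
  shows "splits_into (z1 # z2 # ys) [z2 # ys]"
proof (rule splits_into_single)
  show "(z2 # ys, z1 # z2 # ys) \<in> word_less" by (rule word_less_drop_first[OF assms])
  fix a :: "'f mfpart \<Rightarrow> complex" assume "admissible a"
  show "a (mfpart_of (z1 # z2 # ys)) = a (mfpart_of (z2 # ys))"
    using admissible_drop_first[OF \<open>admissible a\<close>] assms(1)
      by (cases z1, cases z2) simp
qed simp

lemma splits_drop_last: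
  fixes w1 w2 :: "'f::finite \<times> 'l"
  assumes "snd w1 = snd w2" "2 \<le> num_labels (zs @ [w1, w2])"
  shows "splits_into (zs @ [w1, w2]) [zs @ [w1]]"
proof (rule splits_into_single)
  show "(zs @ [w1], zs @ [w1, w2]) \<in> word_less" by (rule word_less_drop_last[OF assms])
  fix a :: "'f mfpart \<Rightarrow> complex" assume "admissible a"
  show "a (mfpart_of (zs @ [w1, w2])) = a (mfpart_of (zs @ [w1]))"
    using admissible_drop_last[OF \<open>admissible a\<close>] assms(1) by (cases w1, cases w2) simp
qed simp

lemma splits_merge_first:
  fixes z1 z2 :: "'f::finite \<times> 'l"
  assumes "snd z1 \<noteq> snd z2" "3 \<le> num_labels (z1 # z2 # ys)"
  shows "\<exists>ps. splits_into (z1 # z2 # ys) ps"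
proof -
  let ?xs = "z1 # z2 # ys"
  \<comment> \<open>Giving the first leg the face of the second makes (iv) applicable at the first two legs.\<close>
  define xs' where "xs' = (fst z2, snd z1) # z2 # ys"
  define p1 where "p1 = relabel (snd z2) (snd z1) xs'"
  define p2 where "p2 = filter (\<lambda>z. snd z \<in> {snd z1, snd z2}) xs'"
  have labels: "snd ` set xs' = snd ` set ?xs" unfolding xs'_def by auto
  show ?thesis
  proof (intro exI[of _ "[p1, p2]"] splits_into_pair)
    show "p1 \<noteq> []" "p2 \<noteq> []" unfolding p1_def p2_def xs'_def by simp_all
    have "snd ` set p1 \<subseteq> snd ` set ?xs - {snd z2}"
      unfolding p1_def labels_relabel labels using assms(1) by auto
    then have "card (snd ` set p1) \<le> card (snd ` set ?xs - {snd z2})"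
      by (rule card_mono[rotated]) simp
    also have "\<dots> < card (snd ` set ?xs)" by (intro psubset_card_mono) auto
    finally have "num_labels p1 < num_labels ?xs" by (simp add: num_labels_def)
    then show "(p1, ?xs) \<in> word_less" by (rule word_less_by_labels)
    have "num_labels p2 \<le> 2" unfolding p2_def by (rule num_labels_le_2) auto
    then show "(p2, ?xs) \<in> word_less" using assms(2) by (intro word_less_by_labels) simp
    fix a :: "'f mfpart \<Rightarrow> complex" assume a: "admissible a"
    have "a (mfpart_of ?xs) = a (mfpart_of xs')"
      unfolding xs'_def
        using admissible_first_face[OF a, of "fst z1" "snd z1" "z2 # ys" "fst z2"] by simp
    also have "\<dots> = a (mfpart_of p1) * a (mfpart_of p2)"
      unfolding p1_def p2_def
      by (rule admissible_merge[OF a, of _ "[]" "fst z2" "snd z1" "snd z2" ys])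
        (use assms(1) in \<open>auto simp: xs'_def\<close>)
    finally show "a (mfpart_of ?xs) = a (mfpart_of p1) * a (mfpart_of p2)" .
  qed
qed

lemma splits_three_runs:
  fixes xs :: "('f::finite \<times> 'l) list"
  assumes xs: "xs = (f1,x) # Ys @ [(fn,x)]" and xy: "x \<noteq> y"
    and cxy: "c \<noteq> x" "c \<noteq> y"
    and Ys: "Ys = u0 # u1 # Y2" "Y2 \<noteq> []" "\<forall>z\<in>set Ys. snd z = y"
  shows "\<exists>ps. splits_into xs ps"
proof -
  have n2: "2 \<le> num_labels xs"
    by (rule two_le_num_labels[of "(f1,x)" _ "hd Ys"]) (use xs Ys xy in \<open>auto simp: hd_in_set\<close>)
  define q where "q = fst u0"
  define g where "g = fst u1"
  have Ys2: "Ys = [(q,y),(g,y)] @ Y2" using Ys unfolding q_def g_def by (auto simp: prod_eq_iff)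
  have Y2y: "\<forall>z\<in>set Y2. snd z = y" using Ys by auto
  define p1 where
    "p1 = (q,x) # map (\<lambda>z. (fst z, x)) [(q,y),(g,y)] @ [(g,c)] @ relabel y c Y2 @ [(fn,x)]"
  define p2 where "p2 = (q,x) # [(q,y),(g,y)] @ [(fn,x)]"
  have factor: "a (mfpart_of xs) = a (mfpart_of p1) * a (mfpart_of p2)"
    if adm: "admissible a" for a
    unfolding xs Ys2 append.assoc p1_def p2_def
    by (rule admissible_factor_three_runs[OF adm xy cxy, where Y1t="[(g,y)]" and Y1a="[(q,y)]"])
      (use Y2y Ys in auto)
  have Tc: "\<forall>z\<in>set (relabel y c Y2). snd z = c" using Y2y by (induction Y2) auto
  have Tne: "relabel y c Y2 \<noteq> []" using Ys(2) by (cases Y2) auto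
  have runs_xs: "num_runs xs = 3"
  proof -
    have "num_runs ([(f1,x)] @ Ys @ [(fn,x)]) = 1 + num_runs (Ys @ [(fn,x)])"
      by (rule num_runs_Cons_run) (use Ys xy in auto)
    moreover have "num_runs (Ys @ [(fn,x)]) = 1 + num_runs [(fn,x)]"
      by (rule num_runs_Cons_run) (use Ys xy in auto)
    ultimately show ?thesis unfolding xs by (simp add: num_runs_singleton)
  qed
  have inner_xs: "inner_length xs = length Ys" unfolding xs
    using inner_length_eq[of "[(f1,x)]" x "[(fn,x)]" x Ys] Ys xy by simp
  have p1_less: "(p1, xs) \<in> word_less"
  proof (rule word_less_by_inner_length)
    show "num_labels p1 \<le> num_labels xs" unfolding p1_def
      by (rule order_trans[OF num_labels_le_2[of _ x c] n2]) (use Tc in auto)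
    have p1e: "p1 = [(q,x),(q,x),(g,x)] @ ((g,c) # relabel y c Y2) @ [(fn,x)]"
      unfolding p1_def by simp
    have "num_runs p1 = 3" unfolding p1e
    proof -
      have "num_runs ([(q,x),(q,x),(g,x)] @ ((g,c) # relabel y c Y2) @ [(fn,x)])
          = 1 + num_runs (((g,c) # relabel y c Y2) @ [(fn,x)])"
        by (rule num_runs_Cons_run) (use cxy in auto)
      moreover have "num_runs (((g,c) # relabel y c Y2) @ [(fn,x)]) = 1 + num_runs [(fn,x)]"
        by (rule num_runs_Cons_run) (use Tc cxy in auto)
      ultimately show "num_runs ([(q,x),(q,x),(g,x)] @ ((g,c) # relabel y c Y2) @ [(fn,x)]) = 3"
        by (simp add: num_runs_singleton)
    qed
    then show "num_runs p1 \<le> num_runs xs" using runs_xs by simp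
    have "inner_length p1 = length ((g,c) # relabel y c Y2)" unfolding p1e
      by (rule inner_length_eq[where lu=x and lv=x]) (use Tc Tne cxy in \<open>auto simp: last_in_set\<close>)
    then show "inner_length p1 < inner_length xs" using inner_xs Ys by simp
  qed
  have p2_less: "(p2, xs) \<in> word_less"
  proof (rule word_less_by_inner_length)
    show "num_labels p2 \<le> num_labels xs"
      unfolding p2_def by (rule order_trans[OF num_labels_le_2[of _ x y] n2]) auto
    have "num_runs p2 = 3" unfolding p2_def using xy by (simp add: num_runs_def)
    then show "num_runs p2 \<le> num_runs xs" using runs_xs by simp
    have "inner_length p2 = 2" unfolding p2_def using xy by (simp add: inner_length_def)
    then show "inner_length p2 < inner_length xs" using inner_xs Ys by simp
  qed
  have ne1: "p1 \<noteq> []" and ne2: "p2 \<noteq> []" unfolding p1_def p2_def by simp_all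
  show ?thesis by (intro exI[of _ "[p1, p2]"] splits_into_pair[OF ne1 ne2 p1_less p2_less factor])
qed

lemma splits_four_runs_long_second:
  fixes xs :: "('f::finite \<times> 'l) list"
  assumes xs: "xs = (f1,x) # Ys @ Xs @ [(fn,y)]" and xy: "x \<noteq> y"
    and cxy: "c \<noteq> x" "c \<noteq> y"
    and Ys: "Ys = u0 # u1 # Yt" "\<forall>z\<in>set Ys. snd z = y"
    and Xs: "Xs \<noteq> []" "\<forall>z\<in>set Xs. snd z = x"
  shows "\<exists>ps. splits_into xs ps"
proof -
  have n2: "2 \<le> num_labels xs"
    by (rule two_le_num_labels[of "(f1,x)" _ "hd Ys"]) (use xs Ys xy in \<open>auto simp: hd_in_set\<close>)
  define q where "q = fst u0"
  define g where "g = fst (last Ys)"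
  have Ysne: "Ys \<noteq> []" using Ys by simp
  have Y1: "Ys = (q,y) # (u1 # Yt)" using Ys unfolding q_def by (auto simp: prod_eq_iff)
  have "snd (last Ys) = y" using Ys Ysne by simp
  then have lst: "last Ys = (g,y)" unfolding g_def by (simp add: prod_eq_iff)
  have "butlast Ys @ [last Ys] = Ys" by (rule append_butlast_last_id[OF Ysne])
  then have Y2: "Ys = butlast Ys @ [(g,y)]" unfolding lst by simp
  define p1 where "p1 = (q,x) # map (\<lambda>z. (fst z, x)) Ys @ [(g,c)] @ Xs @ [(fn,c)]"
  define p2 where "p2 = (q,x) # Ys @ Xs"
  have factor: "a (mfpart_of xs) = a (mfpart_of p1) * a (mfpart_of p2)"
    if adm: "admissible a" for a
    unfolding xs p1_def p2_def
    by (rule admissible_factor_four_runs_long_second[OF adm xy cxy Y1 Y2 Ys(2) Xs(2)])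
  have runs_xs: "num_runs xs = 4"
  proof -
    have "num_runs ([(f1,x)] @ Ys @ Xs @ [(fn,y)]) = 1 + num_runs (Ys @ Xs @ [(fn,y)])"
      by (rule num_runs_Cons_run) (use Ys xy in auto)
    moreover have "num_runs (Ys @ Xs @ [(fn,y)]) = 1 + num_runs (Xs @ [(fn,y)])"
      by (rule num_runs_Cons_run) (use Ys Xs xy in \<open>auto simp: hd_in_set\<close>)
    moreover have "num_runs (Xs @ [(fn,y)]) = 1 + num_runs [(fn,y)]"
      by (rule num_runs_Cons_run) (use Xs xy in auto)
    ultimately show ?thesis unfolding xs by (simp add: num_runs_singleton)
  qed
  have inner_xs: "inner_length xs = length Ys + length Xs" unfolding xs
  proof -
    have "inner_length ([(f1,x)] @ (Ys @ Xs) @ [(fn,y)]) = length (Ys @ Xs)"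
      by (rule inner_length_eq[where lu=x and lv=y]) (use Ys Xs xy in \<open>auto simp: hd_in_set\<close>)
    then show "inner_length ((f1, x) # Ys @ Xs @ [(fn, y)]) = length Ys + length Xs" by simp
  qed
  have p1_less: "(p1, xs) \<in> word_less"
  proof (rule word_less_by_inner_length)
    show "num_labels p1 \<le> num_labels xs" unfolding p1_def
      by (rule order_trans[OF num_labels_le_2[of _ x c] n2]) (use Xs in auto)
    have p1e: "p1 = ((q,x) # map (\<lambda>z. (fst z, x)) Ys) @ ((g,c) # Xs) @ [(fn,c)]"
      unfolding p1_def by simp
    have "num_runs p1 = 4" unfolding p1e
    proof -
      have "num_runs (((q,x) # map (\<lambda>z. (fst z, x)) Ys) @ ((g,c) # Xs) @ [(fn,c)])
          = 1 + num_runs (((g,c) # Xs) @ [(fn,c)])"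
        by (rule num_runs_Cons_run) (use cxy in auto)
      moreover have "num_runs ([(g,c)] @ Xs @ [(fn,c)]) = 1 + num_runs (Xs @ [(fn,c)])"
        by (rule num_runs_Cons_run) (use Xs cxy in \<open>auto simp: hd_in_set\<close>)
      moreover have "num_runs (Xs @ [(fn,c)]) = 1 + num_runs [(fn,c)]"
        by (rule num_runs_Cons_run) (use Xs cxy in auto)
      ultimately show "num_runs
          (((q,x) # map (\<lambda>z. (fst z, x)) Ys) @ ((g,c) # Xs) @ [(fn,c)]) = 4"
        by (simp add: num_runs_singleton)
    qed
    then show "num_runs p1 \<le> num_runs xs" using runs_xs by simp
    have "inner_length p1 = length ((g,c) # Xs)" unfolding p1e
      by (rule inner_length_eq[where lu=x and lv=c]) (use Xs cxy in auto)
    then show "inner_length p1 < inner_length xs" using inner_xs Ys by simp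
  qed
  have p2_less: "(p2, xs) \<in> word_less"
  proof (rule word_less_by_runs)
    show "num_labels p2 \<le> num_labels xs"
      unfolding p2_def by (rule order_trans[OF num_labels_le_2[of _ x y] n2]) (use Ys Xs in auto)
    have "num_runs ([(q,x)] @ Ys @ Xs) = 1 + num_runs (Ys @ Xs)"
      by (rule num_runs_Cons_run) (use Ys xy in auto)
    moreover have "num_runs (Ys @ Xs) = 1 + num_runs Xs"
      by (rule num_runs_Cons_run) (use Ys Xs xy in \<open>auto simp: hd_in_set\<close>)
    ultimately have "num_runs p2 = 3" unfolding p2_def using num_runs_single_label[OF Xs] by simp
    then show "num_runs p2 < num_runs xs" using runs_xs by simp
  qed
  have ne1: "p1 \<noteq> []" and ne2: "p2 \<noteq> []" unfolding p1_def p2_def by simp_all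
  show ?thesis by (intro exI[of _ "[p1, p2]"] splits_into_pair[OF ne1 ne2 p1_less p2_less factor])
qed

lemma splits_four_runs_long_third:
  fixes xs :: "('f::finite \<times> 'l) list"
  assumes xs: "xs = (f1,x) # (q,y) # Xs @ [(fn,y)]" and xy: "x \<noteq> y"
    and cxy: "c \<noteq> x" "c \<noteq> y"
    and Xs: "Xs = u0 # u1 # Xt" "\<forall>z\<in>set Xs. snd z = x"
  shows "\<exists>ps. splits_into xs ps"
proof -
  have n2: "2 \<le> num_labels xs"
    by (rule two_le_num_labels[of "(f1,x)" _ "(q,y)"]) (use xs xy in auto)
  define h where "h = fst u0"
  define e where "e = fst (last Xs)"
  have Xsne: "Xs \<noteq> []" using Xs by simp
  have X1: "Xs = (h,x) # (u1 # Xt)" using Xs unfolding h_def by (auto simp: prod_eq_iff)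
  have "snd (last Xs) = x" using Xs Xsne by simp
  then have lst: "last Xs = (e,x)" unfolding e_def by (simp add: prod_eq_iff)
  have "butlast Xs @ [last Xs] = Xs" by (rule append_butlast_last_id[OF Xsne])
  then have X2: "Xs = butlast Xs @ [(e,x)]" unfolding lst by simp
  define p1 where "p1 = (f1,c) # (q,x) # (h,c) # Xs @ [(e,x)]"
  define p2 where "p2 = (q,y) # Xs @ [(e,y)]"
  have factor: "a (mfpart_of xs) = a (mfpart_of p1) * a (mfpart_of p2)"
    if adm: "admissible a" for a
    unfolding xs p1_def p2_def
    by (rule admissible_factor_four_runs_long_third[OF adm xy cxy X1 X2 Xs(2)])
  have runs_xs: "num_runs xs = 4"
  proof -
    have "num_runs ([(f1,x)] @ [(q,y)] @ Xs @ [(fn,y)]) = 1 + num_runs ([(q,y)] @ Xs @ [(fn,y)])"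
      by (rule num_runs_Cons_run) (use xy in auto)
    moreover have "num_runs ([(q,y)] @ Xs @ [(fn,y)]) = 1 + num_runs (Xs @ [(fn,y)])"
      by (rule num_runs_Cons_run) (use Xs xy in auto)
    moreover have "num_runs (Xs @ [(fn,y)]) = 1 + num_runs [(fn,y)]"
      by (rule num_runs_Cons_run) (use Xs xy in auto)
    ultimately show ?thesis unfolding xs by (simp add: num_runs_singleton)
  qed
  have inner_xs: "inner_length xs = 1 + length Xs" unfolding xs
  proof -
    have "inner_length ([(f1,x)] @ ((q,y) # Xs) @ [(fn,y)]) = length ((q,y) # Xs)"
      by (rule inner_length_eq[where lu=x and lv=y]) (use Xs xy in auto)
    then show "inner_length ((f1,x) # (q,y) # Xs @ [(fn,y)]) = 1 + length Xs" by simp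
  qed
  have p1_less: "(p1, xs) \<in> word_less"
  proof (rule word_less_by_inner_length)
    show "num_labels p1 \<le> num_labels xs" unfolding p1_def
      by (rule order_trans[OF num_labels_le_2[of _ x c] n2]) (use Xs in auto)
    have p1e: "p1 = [(f1,c)] @ [(q,x),(h,c)] @ (Xs @ [(e,x)])" unfolding p1_def by simp
    have "num_runs p1 = 4"
    proof -
      have r0: "num_runs (Xs @ [(e,x)]) = 1"
        by (rule num_runs_single_label[where l=x]) (use Xs in auto)
      have "num_runs ([(h,c)] @ (Xs @ [(e,x)])) = 1 + num_runs (Xs @ [(e,x)])"
        by (rule num_runs_Cons_run) (use Xs cxy in auto)
      moreover have "num_runs ([(q,x)] @ ((h,c) # Xs @ [(e,x)]))
          = 1 + num_runs ((h,c) # Xs @ [(e,x)])"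
        by (rule num_runs_Cons_run) (use cxy in auto)
      moreover have "num_runs ([(f1,c)] @ ((q,x) # (h,c) # Xs @ [(e,x)]))
          = 1 + num_runs ((q,x) # (h,c) # Xs @ [(e,x)])"
        by (rule num_runs_Cons_run) (use cxy in auto)
      ultimately show ?thesis unfolding p1_def using r0 by simp
    qed
    then show "num_runs p1 \<le> num_runs xs" using runs_xs by simp
    have "inner_length p1 = length [(q,x),(h,c)]" unfolding p1e
      by (rule inner_length_eq[where lu=c and lv=x]) (use Xs cxy in auto)
    then show "inner_length p1 < inner_length xs" using inner_xs Xs by simp
  qed
  have p2_less: "(p2, xs) \<in> word_less"
  proof (rule word_less_by_runs)
    show "num_labels p2 \<le> num_labels xs"
      unfolding p2_def by (rule order_trans[OF num_labels_le_2[of _ x y] n2]) (use Xs in auto)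
    have "num_runs ([(q,y)] @ Xs @ [(e,y)]) = 1 + num_runs (Xs @ [(e,y)])"
      by (rule num_runs_Cons_run) (use Xs xy in auto)
    moreover have "num_runs (Xs @ [(e,y)]) = 1 + num_runs [(e,y)]"
      by (rule num_runs_Cons_run) (use Xs xy in auto)
    ultimately have "num_runs p2 = 3" unfolding p2_def by (simp add: num_runs_singleton)
    then show "num_runs p2 < num_runs xs" using runs_xs by simp
  qed
  have ne1: "p1 \<noteq> []" and ne2: "p2 \<noteq> []" unfolding p1_def p2_def by simp_all
  show ?thesis by (intro exI[of _ "[p1, p2]"] splits_into_pair[OF ne1 ne2 p1_less p2_less factor])
qed

lemma splits_many_runs:
  fixes xs :: "('f::finite \<times> 'l) list"
  assumes xs: "xs = (f1,x) # Ys @ Xs @ S" and xy: "x \<noteq> y"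
    and cxy: "c \<noteq> x" "c \<noteq> y"
    and Ys: "Ys \<noteq> []" "\<forall>z\<in>set Ys. snd z = y"
    and Xs: "Xs \<noteq> []" "\<forall>z\<in>set Xs. snd z = x"
    and S: "S = Zs @ R4" "Zs \<noteq> []" "\<forall>z\<in>set Zs. snd z = y" "R4 \<noteq> []"
      "snd (hd R4) = x"
      "\<forall>z\<in>set S. snd z \<in> {x,y}" "S = S0 @ [(h1,m1),(h2,m2)]" "m1 \<noteq> m2"
  shows "\<exists>ps. splits_into xs ps"
proof -
  have n2: "2 \<le> num_labels xs"
    by (rule two_le_num_labels[of "(f1,x)" _ "hd Ys"]) (use xs Ys xy in \<open>auto simp: hd_in_set\<close>)
  define P0 where "P0 = (f1,x) # Ys @ butlast Xs"
  define g where "g = fst (last Xs)"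
  have "snd (last Xs) = x" using Xs by simp
  then have lX: "last Xs = (g, x)" unfolding g_def by (simp add: prod_eq_iff)
  have bX: "butlast Xs @ [(g,x)] = Xs" using append_butlast_last_id[OF Xs(1)] lX by simp
  have PX: "P0 @ [(g,x)] = (f1,x) # Ys @ Xs" unfolding P0_def using bX by simp
  have "P0 @ [(g,x)] @ S = (P0 @ [(g,x)]) @ S" by simp
  also have "\<dots> = ((f1,x) # Ys @ Xs) @ S" by (simp only: PX)
  finally have xs2: "xs = P0 @ [(g,x)] @ S" using xs by simp
  have P0c: "\<forall>z\<in>set P0. snd z \<noteq> c" unfolding P0_def using Ys Xs cxy
    by (auto dest: in_set_butlastD)
  define S' where "S' = S0 @ [(h1,m1),(h1,m2)]"
  define p1 where "p1 = P0 @ [(g,x),(g,y)] @ map (\<lambda>z. (fst z, y)) S'"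
  define p2 where "p2 = filter (\<lambda>z. snd z \<in> {y,c}) P0 @ [(g,c)] @ relabel x c S'"
  have factor: "a (mfpart_of xs) = a (mfpart_of p1) * a (mfpart_of p2)"
    if adm: "admissible a" for a
    unfolding xs2 p1_def p2_def S'_def
      by (rule admissible_factor_many_runs[OF adm xy cxy S(6) S(7) S(8) P0c])
  have sS': "map snd S' = map snd S" unfolding S'_def using S(7) by simp
  have S'l: "\<forall>z\<in>set S'. snd z \<in> {x,y}" using S(6,7) unfolding S'_def by auto
  have S'ne: "S' \<noteq> []" unfolding S'_def by simp
  have hS': "snd (hd S') = y"
  proof -
    have "snd (hd S') = hd (map snd S')" using S'ne by (simp add: hd_map)
    also have "\<dots> = hd (map snd S)" by (simp only: sS')
    also have "\<dots> = snd (hd Zs)" using S(1,2) by (simp add: hd_map)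
    also have "\<dots> = y" using S(2,3) by simp
    finally show ?thesis .
  qed
  have rS: "num_runs S \<ge> 2"
  proof -
    have "snd (last Zs) \<noteq> snd (hd R4)" using S(2,3,5) xy by simp
    then have "num_runs S = num_runs Zs + num_runs R4" using S(1,2,4) num_runs_append by simp
    moreover have "num_runs Zs \<ge> 1" "num_runs R4 \<ge> 1"
      using S(2,4) by (simp_all add: num_runs_def)
    ultimately show ?thesis by simp
  qed
  have runs_xs: "num_runs xs = 3 + num_runs S"
  proof -
    have "num_runs ((Ys @ Xs) @ S) = num_runs (Ys @ Xs) + num_runs S"
      by (rule num_runs_append) (use Ys Xs S(1,2,3) xy in auto)
    moreover have "num_runs (Ys @ Xs) = num_runs Ys + num_runs Xs"
      by (rule num_runs_append) (use Ys Xs xy in \<open>auto simp: hd_in_set\<close>)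
    moreover have "num_runs ([(f1,x)] @ ((Ys @ Xs) @ S))
        = num_runs [(f1,x)] + num_runs ((Ys @ Xs) @ S)"
      by (rule num_runs_append) (use Ys xy in \<open>auto simp: hd_in_set\<close>)
    ultimately show ?thesis unfolding xs
      using num_runs_single_label[OF Ys] num_runs_single_label[OF Xs]
        by (simp add: num_runs_singleton)
  qed
  have ne1: "p1 \<noteq> []" and ne2: "p2 \<noteq> []" unfolding p1_def p2_def by simp_all
  have p1_less: "(p1, xs) \<in> word_less"
  proof (rule word_less_by_runs)
    show "num_labels p1 \<le> num_labels xs" unfolding p1_def P0_def
      by (rule order_trans[OF num_labels_le_2[of _ x y] n2])
        (use Ys Xs in \<open>auto dest: in_set_butlastD\<close>)
    have "p1 = (P0 @ [(g,x)]) @ ((g,y) # map (\<lambda>z. (fst z, y)) S')" unfolding p1_def by simp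
    also have "\<dots> = ((f1,x) # Ys @ Xs) @ ((g,y) # map (\<lambda>z. (fst z, y)) S')"
      by (simp only: PX)
    finally have "p1 = [(f1,x)] @ Ys @ Xs @ ((g,y) # map (\<lambda>z. (fst z, y)) S')" by simp
    moreover have "num_runs ([(f1,x)] @ Ys @ Xs @ ((g,y) # map (\<lambda>z. (fst z, y)) S')) = 4"
    proof -
      have r4: "num_runs ((g,y) # map (\<lambda>z. (fst z, y)) S') = 1"
        by (rule num_runs_single_label) auto
      have "num_runs (Xs @ ((g,y) # map (\<lambda>z. (fst z, y)) S')) = num_runs Xs + 1"
        using num_runs_append[of Xs "(g,y) # map (\<lambda>z. (fst z, y)) S'"] Xs xy r4 by simp
      moreover have "num_runs (Ys @ Xs @ ((g,y) # map (\<lambda>z. (fst z, y)) S'))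
          = num_runs Ys + num_runs (Xs @ ((g,y) # map (\<lambda>z. (fst z, y)) S'))"
        by (rule num_runs_append) (use Ys Xs xy in \<open>auto simp: hd_in_set\<close>)
      moreover have "num_runs ([(f1,x)] @ Ys @ Xs @ ((g,y) # map (\<lambda>z. (fst z, y)) S'))
          = 1 + num_runs (Ys @ Xs @ ((g,y) # map (\<lambda>z. (fst z, y)) S'))"
        using num_runs_append[of "[(f1,x)]"
          "Ys @ Xs @ ((g,y) # map (\<lambda>z. (fst z, y)) S')"] Ys xy
        by (simp add: num_runs_singleton hd_in_set)
      ultimately show ?thesis
        using num_runs_single_label[OF Ys] num_runs_single_label[OF Xs] by simp
    qed
    ultimately show "num_runs p1 < num_runs xs" using runs_xs rS by simp
  qed
  have p2_less: "(p2, xs) \<in> word_less"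
  proof (rule word_less_by_runs)
    have fP: "filter (\<lambda>z. snd z \<in> {y,c}) P0 = Ys"
    proof -
      have "\<forall>z\<in>set (butlast Xs). snd z = x" using Xs(2) by (auto dest: in_set_butlastD)
      then have "filter (\<lambda>z. snd z \<in> {y,c}) (butlast Xs) = []"
        using xy cxy by (intro filter_False) auto
      then show ?thesis unfolding P0_def using Ys xy cxy by (simp add: filter_True)
    qed
    show "num_labels p2 \<le> num_labels xs" unfolding p2_def fP
      by (rule order_trans[OF num_labels_le_2[of _ y c] n2])
        (use Ys labels_relabel_fresh[OF S'l, of c] in auto)
    have rT: "num_runs (relabel x c S') = num_runs S"
    proof -
      have "\<forall>z\<in>set S'. snd z \<noteq> c" using S'l cxy by auto
      then have "num_runs (relabel x c S') = num_runs S'" by (rule num_runs_relabel)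
      also have "\<dots> = num_runs S" by (rule num_runs_map_snd[OF sS'])
      finally show ?thesis .
    qed
    have hT: "snd (hd (relabel x c S')) = y" using hS' S'ne xy by (cases S') auto
    have "num_runs ([(g,c)] @ relabel x c S') = 1 + num_runs S"
    proof -
      have "relabel x c S' \<noteq> []" using S'ne by (cases S') auto
      then show ?thesis
        using num_runs_append[of "[(g,c)]" "relabel x c S'"] hT cxy rT
          by (simp add: num_runs_singleton)
    qed
    moreover have "num_runs (Ys @ ([(g,c)] @ relabel x c S'))
        = num_runs Ys + num_runs ([(g,c)] @ relabel x c S')"
      by (rule num_runs_append) (use Ys cxy in auto)
    ultimately have "num_runs p2 = 2 + num_runs S" unfolding p2_def fP
      using num_runs_single_label[OF Ys] by simp
    then show "num_runs p2 < num_runs xs" using runs_xs by simp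
  qed
  show ?thesis by (intro exI[of _ "[p1, p2]"] splits_into_pair[OF ne1 ne2 p1_less p2_less factor])
qed

section \<open>Words on two labels\<close>

lemma split_first_run:
  assumes "xs \<noteq> []"
  obtains ys r where "xs = ys @ r" "ys \<noteq> []" "\<forall>z\<in>set ys. snd z = snd (hd xs)"
    "r \<noteq> [] \<Longrightarrow> snd (hd r) \<noteq> snd (hd xs)"
proof
  let ?P = "\<lambda>z. snd z = snd (hd xs)"
  show "xs = takeWhile ?P xs @ dropWhile ?P xs" by simp
  show "takeWhile ?P xs \<noteq> []" using assms by (cases xs) auto
  show "\<forall>z\<in>set (takeWhile ?P xs). ?P z" by (auto dest: set_takeWhileD)
  show "snd (hd (dropWhile ?P xs)) \<noteq> snd (hd xs)" if "dropWhile ?P xs \<noteq> []"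
    using hd_dropWhile[OF that] .
qed

lemma append_eq_append_two_last:
  assumes "zs @ [w1, w2] = us @ vs" "2 \<le> length vs"
  obtains vs' where "vs = vs' @ [w1, w2]"
proof -
  obtain vs1 v2 where v2: "vs = vs1 @ [v2]" using assms(2) by (cases vs rule: rev_cases) auto
  obtain vs' v1 where v1: "vs1 = vs' @ [v1]" using assms(2) v2 by (cases vs1 rule: rev_cases) auto
  have "zs @ [w1, w2] = (us @ vs') @ [v1, v2]" using assms(1) v1 v2 by simp
  then have "[w1, w2] = [v1, v2]" by (subst (asm) append_eq_append_conv) auto
  then show ?thesis using that v1 v2 by auto
qed

lemma last_run_singleton:
  assumes "zs @ [w1, w2] = us @ vs" "snd w1 \<noteq> snd w2" "vs \<noteq> []"
    "\<forall>z\<in>set vs. snd z = l"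
  obtains v where "vs = [v]"
proof (cases "2 \<le> length vs")
  case True
  then obtain vs' where "vs = vs' @ [w1, w2]" using append_eq_append_two_last[OF assms(1)] by blast
  then show ?thesis using assms(2,4) by auto
next
  case False
  then have "length vs = 1" using assms(3) by (cases vs) (auto simp: Suc_le_eq)
  then show ?thesis using that by (auto simp: length_Suc_conv)
qed

lemma two_label_word_shapes:
  assumes xs: "xs = (f,x) # rest" "rest \<noteq> []" "snd (hd rest) = y" and xy: "x \<noteq> y"
    and labels: "\<forall>z\<in>set xs. snd z \<in> {x, y}"
    and last_two: "xs = zs @ [w1, w2]" "snd w1 \<noteq> snd w2"
  obtains (two_runs) g where "xs = [(f,x), (g,y)]"
  | (three_runs) Ys h where "xs = (f,x) # Ys @ [(h,x)]" "Ys \<noteq> []"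
    "\<forall>z\<in>set Ys. snd z = y"
  | (four_runs) Ys Xs h where "xs = (f,x) # Ys @ Xs @ [(h,y)]"
      "Ys \<noteq> []" "\<forall>z\<in>set Ys. snd z = y" "Xs \<noteq> []"
        "\<forall>z\<in>set Xs. snd z = x"
  | (more_runs) Ys Xs Zs R where "xs = (f,x) # Ys @ Xs @ Zs @ R"
      "Ys \<noteq> []" "\<forall>z\<in>set Ys. snd z = y" "Xs \<noteq> []"
        "\<forall>z\<in>set Xs. snd z = x"
      "Zs \<noteq> []" "\<forall>z\<in>set Zs. snd z = y" "R \<noteq> []" "snd (hd R) = x"
proof -
  have other_label: "snd (hd r) = u"
    if "r \<noteq> []" "set r \<subseteq> set xs" "snd (hd r) \<noteq> v" "{u, v} = {x, y}"
      for r u v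
  proof -
    have "snd (hd r) \<in> {x, y}" using labels that(1,2) hd_in_set by blast
    then show ?thesis using that(3,4) by (auto simp: doubleton_eq_iff)
  qed
  obtain Ys R2 where R2: "rest = Ys @ R2" "Ys \<noteq> []" "\<forall>z\<in>set Ys. snd z = y"
    "R2 \<noteq> [] \<Longrightarrow> snd (hd R2) \<noteq> y"
    using split_first_run[OF xs(2)] xs(3) by metis
  show ?thesis
  proof (cases "R2 = []")
    case True
    then obtain u where "Ys = [u]"
      using last_run_singleton[of zs w1 w2 "[(f,x)]" Ys y] last_two xs R2 by auto
    then show ?thesis using two_runs xs R2 True by (cases u) auto
  next
    case False
    then have "snd (hd R2) = x" using other_label[of R2 x y] R2 xs by auto
    then obtain Xs R3 where R3: "R2 = Xs @ R3" "Xs \<noteq> []" "\<forall>z\<in>set Xs. snd z = x"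
      "R3 \<noteq> [] \<Longrightarrow> snd (hd R3) \<noteq> x"
      using split_first_run[OF False] by metis
    show ?thesis
    proof (cases "R3 = []")
      case True
      then obtain v where "Xs = [v]"
        using last_run_singleton[of zs w1 w2 "(f,x) # Ys" Xs x] last_two xs R2 R3 by auto
      then show ?thesis using three_runs xs R2 R3 True by (cases v) auto
    next
      case False
      then have "snd (hd R3) = y" using other_label[of R3 y x] R2 R3 xs by auto
      then obtain Zs R4 where R4: "R3 = Zs @ R4" "Zs \<noteq> []" "\<forall>z\<in>set Zs. snd z = y"
        "R4 \<noteq> [] \<Longrightarrow> snd (hd R4) \<noteq> y"
        using split_first_run[OF False] by metis
      show ?thesis
      proof (cases "R4 = []")
        case True
        then obtain v where "Zs = [v]"
          using last_run_singleton[of zs w1 w2 "(f,x) # Ys @ Xs" Zs y] last_two xs R2 R3 R4 by auto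
        then show ?thesis using four_runs xs R2 R3 R4 True by (cases v) auto
      next
        case False
        then have "snd (hd R4) = x" using other_label[of R4 x y] R2 R3 R4 xs by auto
        then show ?thesis using more_runs xs R2 R3 R4 False by auto
      qed
    qed
  qed
qed

section \<open>Determination by the basic coefficients\<close>

definition same_basic_coeffs :: "('f mfpart \<Rightarrow> complex) \<Rightarrow> ('f mfpart \<Rightarrow> complex) \<Rightarrow> bool" where
  "same_basic_coeffs a b \<longleftrightarrow>
      (\<forall>q Q. nu1 a q = nu1 b q \<and> nu2 a q Q = nu2 b q Q \<and> xi2 a q Q = xi2 b q Q)"

definition determined_by_basics :: "('f::finite) mfpart \<Rightarrow> bool" where
  "determined_by_basics x \<longleftrightarrow>
     (\<forall>a b. admissible a \<longrightarrow> admissible b \<longrightarrow> same_basic_coeffs a b \<longrightarrow> a x = b x)"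

lemma determined_by_basicsI:
  assumes "\<And>a. admissible a \<Longrightarrow> a x = v a"
    and "\<And>a b. admissible a \<Longrightarrow> admissible b \<Longrightarrow>
        same_basic_coeffs a b \<Longrightarrow> v a = v b"
  shows "determined_by_basics x"
  using assms by (simp add: determined_by_basics_def)

lemma determined_by_basics_if_splits:
  assumes "splits_into xs ps" "\<forall>p\<in>set ps. determined_by_basics (mfpart_of p)"
  shows "determined_by_basics (mfpart_of xs)"
proof (rule determined_by_basicsI)
  show "a (mfpart_of xs) = (\<Prod>p\<leftarrow>ps. a (mfpart_of p))" if "admissible a" for a
    using assms(1) that by (simp add: splits_into_def)
  fix a b :: "'a mfpart \<Rightarrow> complex"
  assume "admissible a" "admissible b" "same_basic_coeffs a b"
  then have "a (mfpart_of p) = b (mfpart_of p)" if "p \<in> set ps" for p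
    using assms(2) that by (simp add: determined_by_basics_def)
  then show "(\<Prod>p\<leftarrow>ps. a (mfpart_of p)) = (\<Prod>p\<leftarrow>ps. b (mfpart_of p))"
    by (intro arg_cong[where f = prod_list] map_cong) auto
qed

lemma determined_by_basics_single_label:
  assumes "xs \<noteq> []" "\<forall>z\<in>set xs. snd z = l"
  shows "determined_by_basics (mfpart_of xs)"
  by (rule determined_by_basicsI[where v="\<lambda>_. 1"]) (use admissible_single_label assms in auto)

lemma determined_by_basics_two_singletons:
  assumes "l1 \<noteq> l2"
  shows "determined_by_basics (mfpart_of [(f,l1), (g,l2)])"
  by (rule determined_by_basicsI[where v="\<lambda>_. 1"]) (use admissible_two_singletons assms in auto)

lemma two_labels_determined_or_splits:
  fixes xs :: "('f::finite \<times> nat) list"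
  assumes xs: "xs = (f,x) # rest" "rest \<noteq> []" "snd (hd rest) = y" and xy: "x \<noteq> y"
    and labels: "\<forall>z\<in>set xs. snd z \<in> {x, y}"
    and last_two: "xs = zs @ [w1, w2]" "snd w1 \<noteq> snd w2"
  shows "determined_by_basics (mfpart_of xs) \<or> (\<exists>ps. splits_into xs ps)"
proof -
  define c where "c = Suc (x + y)"
  have c: "c \<noteq> x" "c \<noteq> y" unfolding c_def by auto
  show ?thesis
    using xs xy labels last_two
  proof (cases rule: two_label_word_shapes)
    case (two_runs g)
    then show ?thesis using determined_by_basics_two_singletons[OF xy] by blast
  next
    case (three_runs Ys h)
    consider u where "Ys = [u]" | u0 u1 where "Ys = [u0, u1]"
      | u0 u1 u2 Y2 where "Ys = u0 # u1 # u2 # Y2"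
      using three_runs(2) by (metis list.exhaust)
    then show ?thesis
    proof cases
      case (1 u)
      then have "xs = (f,x) # [(fst u, y)] @ [(h,x)]" using three_runs by (cases u) simp
      then have "a (mfpart_of xs) = nu1 a (fst u)" if "admissible a" for a
        using admissible_end_faces[OF that, of f x "[(fst u, y)]" h x "fst u" "fst u"]
        by (simp add: nu1_def mfpart_of_nu1_word[OF xy])
      then show ?thesis
        by (intro disjI1 determined_by_basicsI[where v = "\<lambda>a. nu1 a (fst u)"])
          (auto simp: same_basic_coeffs_def)
    next
      case (2 u0 u1)
      then have "xs = (f,x) # [(fst u0, y), (fst u1, y)] @ [(h,x)]"
        using three_runs by (cases u0, cases u1) simp
      then have "a (mfpart_of xs) = nu2 a (fst u0) (fst u1)" if "admissible a" for a
        using admissible_end_faces[OF that, of f x "[(fst u0, y), (fst u1, y)]" h x "fst u0"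
          "fst u1"]
        by (simp add: nu2_def mfpart_of_nu2_word[OF xy])
      then show ?thesis
        by (intro disjI1 determined_by_basicsI[where v = "\<lambda>a. nu2 a (fst u0) (fst u1)"])
          (auto simp: same_basic_coeffs_def)
    next
      case (3 u0 u1 u2 Y2)
      then show ?thesis
        using splits_three_runs[OF three_runs(1) xy c, of u0 u1 "u2 # Y2"] three_runs by simp
    qed
  next
    case (four_runs Ys Xs h)
    consider u0 u1 Y2 where "Ys = u0 # u1 # Y2" | u v0 v1 X2 where "Ys = [u]" "Xs = v0 # v1 # X2"
      | u v where "Ys = [u]" "Xs = [v]"
      using four_runs(2,4) by (metis list.exhaust)
    then show ?thesis
    proof cases
      case 1
      then show ?thesis
        using splits_four_runs_long_second[OF four_runs(1) xy c _ four_runs(3-5)] by blast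
    next
      case (2 u v0 v1 X2)
      then have "xs = (f,x) # (fst u, y) # Xs @ [(h,y)]" using four_runs by (cases u) simp
      then show ?thesis using splits_four_runs_long_third[OF _ xy c 2(2) four_runs(5)] by blast
    next
      case (3 u v)
      then have "xs = (f,x) # [(fst u, y), (fst v, x)] @ [(h,y)]"
        using four_runs by (cases u, cases v) simp
      then have "a (mfpart_of xs) = xi2 a (fst u) (fst v)" if "admissible a" for a
        using admissible_end_faces[OF that, of f x "[(fst u, y), (fst v, x)]" h y "fst u" "fst v"]
        by (simp add: xi2_def mfpart_of_xi2_word[OF xy])
      then show ?thesis
        by (intro disjI1 determined_by_basicsI[where v = "\<lambda>a. xi2 a (fst u) (fst v)"])
          (auto simp: same_basic_coeffs_def)
    qed
  next
    case (more_runs Ys Xs Zs R)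
    have "2 \<le> length (Zs @ R)" using more_runs(6,8) by (cases Zs; cases R) auto
    then obtain S0 where "Zs @ R = S0 @ [w1, w2]"
      using append_eq_append_two_last[of zs w1 w2 "(f,x) # Ys @ Xs" "Zs @ R"] last_two more_runs(1)
        by auto
    then have S0: "Zs @ R = S0 @ [(fst w1, snd w1), (fst w2, snd w2)]" by simp
    have "\<forall>z\<in>set (Zs @ R). snd z \<in> {x, y}" using labels more_runs(1) by auto
    from splits_many_runs[OF more_runs(1) xy c more_runs(2-5) refl more_runs(6-9) this S0
        last_two(2)]
    show ?thesis ..
  qed
qed

lemma determined_or_splits:
  fixes xs :: "('f::finite \<times> nat) list"
  assumes "xs \<noteq> []"
  shows "determined_by_basics (mfpart_of xs) \<or> (\<exists>ps. splits_into xs ps)"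
proof (cases "num_labels xs \<le> 1")
  case True
  with determined_by_basics_single_label[OF assms] num_labels_le_1_single_label[OF True assms]
  show ?thesis by blast
next
  case False
  obtain z1 z2 ys where xs: "xs = z1 # z2 # ys"
  proof (cases xs)
    case (Cons z1 r)
    then show ?thesis using that False by (cases r) (auto simp: num_labels_def)
  qed (use assms in simp)
  consider "snd z1 = snd z2" | "snd z1 \<noteq> snd z2" "3 \<le> num_labels xs"
    | "snd z1 \<noteq> snd z2" "num_labels xs = 2"
    using False by linarith
  then show ?thesis
  proof cases
    case 1
    then show ?thesis using splits_drop_first[of z1 z2 ys] False xs by auto
  next
    case 2
    then show ?thesis using splits_merge_first[of z1 z2 ys] xs by auto
  next
    case 3
    obtain w1 w2 rs where "rev xs = w2 # w1 # rs"
    proof (cases "rev xs")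
      case (Cons w2 r)
      then show ?thesis using that xs by (cases r) auto
    qed (use xs in simp)
    then have last_two: "xs = rev rs @ [w1, w2]" by (simp add: rev_swap)
    have labels: "\<forall>z\<in>set xs. snd z \<in> {snd z1, snd z2}"
      using num_labels_eq_2_labels[OF 3(2), of z1 z2] 3(1) xs by simp
    show ?thesis
    proof (cases "snd w1 = snd w2")
      case True
      then show ?thesis using splits_drop_last[of w1 w2 "rev rs"] 3(2) last_two by auto
    next
      case False
      show ?thesis
        by (rule two_labels_determined_or_splits[of xs "fst z1" "snd z1" "z2 # ys" "snd z2"
          "rev rs" w1 w2])
          (use xs 3(1) labels last_two False in auto)
    qed
  qed
qed

lemma determined_by_basics_mfpart_of:
  fixes xs :: "('f::finite \<times> nat) list"
  shows "xs \<noteq> [] \<Longrightarrow> determined_by_basics (mfpart_of xs)"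
proof (induction xs rule: wf_induct[OF wf_word_less])
  case (1 xs)
  from determined_or_splits[OF 1(2)] show ?case
  proof
    assume "\<exists>ps. splits_into xs ps"
    then obtain ps where ps: "splits_into xs ps" ..
    then have "\<forall>p\<in>set ps. determined_by_basics (mfpart_of p)"
      using 1(1) by (simp add: splits_into_def)
    then show ?thesis by (rule determined_by_basics_if_splits[OF ps])
  qed
qed

lemma basic_coeffs_eq_if_eq:
  fixes a b :: "('f::finite) mfpart \<Rightarrow> complex"
  assumes "\<forall>x\<in>mfparts. a x = b x"
  shows "nu1 a q = nu1 b q" "xi1 a q = xi1 b q" "nu2 a q Q = nu2 b q Q" "xi2 a q Q = xi2 b q Q"
proof -
  have "(0::nat) \<noteq> 2" by simp
  note words = mfpart_of_nu1_word[OF this] mfpart_of_nu2_word[OF this] mfpart_of_xi2_word[OF this]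
  have on_words: "a (mfpart_of xs) = b (mfpart_of xs)" if "xs \<noteq> []" for xs :: "('f \<times> nat) list"
    using assms mfpart_of_in_mfparts[OF that] by blast
  show "nu1 a q = nu1 b q"
    using on_words[of "[(q,0),(q,2),(q,0)]"] by (simp add: nu1_def words)
  show "xi1 a q = xi1 b q"
    using on_words[of "[(q,0),(q,2),(q,0),(q,2)]"] by (simp add: xi1_def words)
  show "nu2 a q Q = nu2 b q Q"
    using on_words[of "[(q,0),(q,2),(Q,2),(Q,0)]"] by (simp add: nu2_def words)
  show "xi2 a q Q = xi2 b q Q"
    using on_words[of "[(q,0),(q,2),(Q,0),(Q,2)]"] by (simp add: xi2_def words)
qed

lemma eq_if_same_basic_coeffs:
  fixes a b :: "('f::finite) mfpart \<Rightarrow> complex"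
  assumes "admissible a" "admissible b" "same_basic_coeffs a b" "x \<in> mfparts"
  shows "a x = b x"
proof -
  have "(fst x, snd x) \<in> mfparts" using assms(4) by simp
  then obtain xs :: "('f \<times> nat) list" where "xs \<noteq> []" "mfpart_of xs = (fst x, snd x)"
    by (rule mfparts_eq_mfpart_of)
  with determined_by_basics_mfpart_of show ?thesis
    using assms(1-3) by (auto simp: determined_by_basics_def)
qed

theorem corollary6p6:
  fixes a b :: "('f::finite) mfpart \<Rightarrow> complex"
  assumes "admissible a" and "admissible b"
  shows "(\<forall>x\<in>mfparts. a x = b x) \<longleftrightarrow>
         (\<forall>q Q. nu1 a q = nu1 b q \<and> xi1 a q = xi1 b q \<and>
                nu2 a q Q = nu2 b q Q \<and> xi2 a q Q = xi2 b q Q)"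
proof
  assume "\<forall>x\<in>mfparts. a x = b x"
  from basic_coeffs_eq_if_eq[OF this]
  show "\<forall>q Q. nu1 a q = nu1 b q \<and> xi1 a q = xi1 b q \<and>
      nu2 a q Q = nu2 b q Q \<and> xi2 a q Q = xi2 b q Q" by blast
next
  assume "\<forall>q Q. nu1 a q = nu1 b q \<and> xi1 a q = xi1 b q \<and>
      nu2 a q Q = nu2 b q Q \<and> xi2 a q Q = xi2 b q Q"
  then have "same_basic_coeffs a b" by (simp add: same_basic_coeffs_def)
  from eq_if_same_basic_coeffs[OF assms this] show "\<forall>x\<in>mfparts. a x = b x" by blast
qed

end
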